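(* Let $l,u$ be integers with $0\le l\le u\le K$, $u>0$, $l<K$. Suppose that for every $\alpha,\beta\in(0,1)$ the thresholds $a,b,c,d$ of the proposed procedure $\hat\chi$ are chosen so that $\hat\chi\in\Delta(\alpha,\beta,\Pi_{l,u})$, and that $a,c\sim|\log\alpha|$ and $b,d\sim|\log\beta|$ as $\alpha,\beta\to0$. Suppose that for every $k\in[K]$ there are positive $I_k,J_k$ such that $$\mathrm P_k^1\Big(\limsup_n\tfrac{\lambda_k(n)}{n}\le I_k\Big)=1,\quad \mathrm P_k^0\Big(\limsup_n\tfrac{-\lambda_k(n)}{n}\le J_k\Big)=1,$$ and, for every $\epsilon>0$, $\sum_n\mathrm P_k^1(\lambda_k(n)/n\le I_k-\epsilon)<\infty$ and $\sum_n\mathrm P_k^0(-\lambda_k(n)/n\le J_k-\epsilon)<\infty$. Then, as $\alpha,\beta\to0$, $$\mathrm E_A[\hat T_i]\sim\mathcal L_{i,A}(\alpha,\beta,\Pi_{l,u})\sim\frac{|\log\alpha|}{I_i+\mathcal J_A\mathbf 1\{|A|=l\}},\qquad \mathrm E_A[\hat T_j]\sim\mathcal L_{j,A}(\alpha,\beta,\Pi_{l,u})\sim\frac{|\log\beta|}{J_j+\mathcal I_A\mathbf 1\{|A|=u\}},$$ simultaneously for every $i\in A$, $j\notin A$, $A\in\Pi_{l,u}$.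
   Context: Let $K\ge1$, $[K]=\{1,\dots,K\}$, $\mathbb N=\{1,2,\dots\}$. There are $K$ independent data streams $X_k=\{X_k(n):n\in\mathbb N\}$; $\mathcal F_k(n)=\sigma(X_k(t):t\le n)$, $\mathcal F(n)=\sigma(\mathcal F_k(n):k\in[K])$. For each $k$, $\mathrm P_k^0,\mathrm P_k^1$ are distributions of $X_k$ mutually absolutely continuous on each $\mathcal F_k(n)$, $\lambda_k(n)=\log\frac{d\mathrm P_k^1}{d\mathrm P_k^0}(\mathcal F_k(n))$. For $A\subseteq[K]$, $\mathrm P_A$ is the joint law with independent streams, $X_k\sim\mathrm P_k^1$ if $k\in A$, $\mathrm P_k^0$ otherwise; $\mathrm E_A$ its expectation. $\mathcal I_A=\min_{i\in A}I_i$, $\mathcal J_A=\min_{j\notin A}J_j$ (min over empty set $=\infty$). $\Pi_{l,u}=\{A\subseteq[K]:l\le|A|\le u\}$. $\lambda_{(1)}(n)\ge\dots\ge\lambda_{(K)}(n)$ are the ordered LLRs. A procedure $\chi=(\mathbf T,\mathbf D)$: $\mathbb N$-valued stopping times $T_k$ w.r.t. $\{\mathcal F(n)\}$ and $\mathcal F(T_k)$-measurable Bernoulli $D_k$. $\mathrm{FWE}^1_A(\chi)=\mathrm P_A(\exists j\notin A:D_j=1)$, $\mathrm{FWE}^2_A(\chi)=\mathrm P_A(\exists i\in A:D_i=0)$. $\Delta(\alpha,\beta,\Pi)$: procedures with $\mathrm{FWE}^1_A\le\alpha$, $\mathrm{FWE}^2_A\le\beta$ for all $A\in\Pi$; $\mathcal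 L_{k,A}(\alpha,\beta,\Pi)=\inf\{\mathrm E_A[T_k]:\chi\in\Delta(\alpha,\beta,\Pi)\}$. Proposed procedure $\hat\chi$ (thresholds $a,b,c,d>0$): $\hat T_k=\hat T_{k,1}\wedge\hat T_{k,2}$, $D_k=1$ iff $\hat T_k=\hat T_{k,1}$; if $l=u\equiv m$, $\hat T_{k,1}=\inf\{n:\lambda_k(n)\ge\lambda_{(m+1)}(n)+c\}$, $\hat T_{k,2}=\inf\{n:\lambda_k(n)\le\lambda_{(m)}(n)-d\}$; if $l<u$, $\hat T_{k,1}=\inf\{n:\lambda_k(n)\ge\min\{a,\lambda_{(l+1)}(n)+c\}\}$, $\hat T_{k,2}=\inf\{n:\lambda_k(n)\le\max\{-b,\lambda_{(u)}(n)-d\}\}$. $x\sim y$ means $x/y\to1$. *)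

theory Defs
  imports "HOL-Probability.Probability" "HOL-Library.Landau_Symbols"
begin

text \<open>Stream k takes values in the measurable
space M k at each time; its path space is nat \<Rightarrow> 'x, where coordinate t
holds the observation at time t+1. So the first n observations are the coordinates
in {..<n}.\<close>

definition strm_path_space :: "(nat \<Rightarrow> 'x measure) \<Rightarrow> nat \<Rightarrow> (nat \<Rightarrow> 'x) measure" where
  "strm_path_space M k = (\<Pi>\<^sub>M t\<in>(UNIV::nat set). M k)"

definition joint_space :: "nat \<Rightarrow> (nat \<Rightarrow> 'x measure) \<Rightarrow> (nat \<Rightarrow> nat \<Rightarrow> 'x) measure" where
  "joint_space K M = (\<Pi>\<^sub>M k\<in>{1..K}. strm_path_space M k)"

definition stream_filt :: "(nat \<Rightarrow> 'x measure) \<Rightarrow> nat \<Rightarrow> nat \<Rightarrow> (nat \<Rightarrow> 'x) measure" where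
  "stream_filt M k n = vimage_algebra (space (strm_path_space M k)) (\<lambda>x. restrict x {..<n})
     (\<Pi>\<^sub>M t\<in>{..<n}. M k)"

definition joint_filt :: "nat \<Rightarrow> (nat \<Rightarrow> 'x measure) \<Rightarrow> nat \<Rightarrow> (nat \<Rightarrow> nat \<Rightarrow> 'x) measure" where
  "joint_filt K M n = vimage_algebra (space (joint_space K M))
     (\<lambda>\<omega>. \<lambda>k\<in>{1..K}. restrict (\<omega> k) {..<n})
     (\<Pi>\<^sub>M k\<in>{1..K}. \<Pi>\<^sub>M t\<in>{..<n}. M k)"

definition PA :: "nat \<Rightarrow> (nat \<Rightarrow> (nat \<Rightarrow> 'x) measure) \<Rightarrow> (nat \<Rightarrow> (nat \<Rightarrow> 'x) measure)
     \<Rightarrow> nat set \<Rightarrow> (nat \<Rightarrow> nat \<Rightarrow> 'x) measure" where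
  "PA K P0 P1 A = (\<Pi>\<^sub>M k\<in>{1..K}. (if k \<in> A then P1 k else P0 k))"

text \<open>A procedure: stopping times T k (values in {1,2,...}, possibly infinite only on a
  P_A-null set for every A) w.r.t. F(n), and decisions D k measurable w.r.t. F(T k).\<close>
definition is_procedure :: "nat \<Rightarrow> (nat \<Rightarrow> 'x measure) \<Rightarrow> (nat \<Rightarrow> (nat \<Rightarrow> 'x) measure)
     \<Rightarrow> (nat \<Rightarrow> (nat \<Rightarrow> 'x) measure) \<Rightarrow> (nat \<Rightarrow> (nat \<Rightarrow> nat \<Rightarrow> 'x) \<Rightarrow> enat)
     \<Rightarrow> (nat \<Rightarrow> (nat \<Rightarrow> nat \<Rightarrow> 'x) \<Rightarrow> bool) \<Rightarrow> bool" where
  "is_procedure K M P0 P1 T D \<longleftrightarrow>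
     (\<forall>k\<in>{1..K}.
        (\<forall>\<omega>\<in>space (joint_space K M). 1 \<le> T k \<omega>) \<and>
        (\<forall>n. {\<omega>\<in>space (joint_space K M). T k \<omega> \<le> enat n} \<in> sets (joint_filt K M n)) \<and>
        (\<forall>A. A \<subseteq> {1..K} \<longrightarrow> (AE \<omega> in PA K P0 P1 A. T k \<omega> \<noteq> \<infinity>)) \<and>
        {\<omega>\<in>space (joint_space K M). D k \<omega>} \<in> sets (joint_space K M) \<and>
        (\<forall>n. {\<omega>\<in>space (joint_space K M). D k \<omega> \<and> T k \<omega> \<le> enat n} \<in> sets (joint_filt K M n)))"

definition FWE1 :: "nat \<Rightarrow> (nat \<Rightarrow> (nat \<Rightarrow> 'x) measure) \<Rightarrow> (nat \<Rightarrow> (nat \<Rightarrow> 'x) measure)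
     \<Rightarrow> (nat \<Rightarrow> (nat \<Rightarrow> nat \<Rightarrow> 'x) \<Rightarrow> bool) \<Rightarrow> nat set \<Rightarrow> real" where
  "FWE1 K P0 P1 D A = measure (PA K P0 P1 A)
     {\<omega>\<in>space (PA K P0 P1 A). \<exists>j\<in>{1..K} - A. D j \<omega>}"

definition FWE2 :: "nat \<Rightarrow> (nat \<Rightarrow> (nat \<Rightarrow> 'x) measure) \<Rightarrow> (nat \<Rightarrow> (nat \<Rightarrow> 'x) measure)
     \<Rightarrow> (nat \<Rightarrow> (nat \<Rightarrow> nat \<Rightarrow> 'x) \<Rightarrow> bool) \<Rightarrow> nat set \<Rightarrow> real" where
  "FWE2 K P0 P1 D A = measure (PA K P0 P1 A)
     {\<omega>\<in>space (PA K P0 P1 A). \<exists>i\<in>A. \<not> D i \<omega>}"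

definition in_Delta :: "nat \<Rightarrow> (nat \<Rightarrow> 'x measure) \<Rightarrow> (nat \<Rightarrow> (nat \<Rightarrow> 'x) measure)
     \<Rightarrow> (nat \<Rightarrow> (nat \<Rightarrow> 'x) measure) \<Rightarrow> real \<Rightarrow> real \<Rightarrow> nat set set
     \<Rightarrow> (nat \<Rightarrow> (nat \<Rightarrow> nat \<Rightarrow> 'x) \<Rightarrow> enat) \<Rightarrow> (nat \<Rightarrow> (nat \<Rightarrow> nat \<Rightarrow> 'x) \<Rightarrow> bool) \<Rightarrow> bool" where
  "in_Delta K M P0 P1 \<alpha> \<beta> PS T D \<longleftrightarrow> is_procedure K M P0 P1 T D \<and>
     (\<forall>A\<in>PS. FWE1 K P0 P1 D A \<le> \<alpha> \<and> FWE2 K P0 P1 D A \<le> \<beta>)"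

definition ExpT :: "nat \<Rightarrow> (nat \<Rightarrow> (nat \<Rightarrow> 'x) measure) \<Rightarrow> (nat \<Rightarrow> (nat \<Rightarrow> 'x) measure)
     \<Rightarrow> nat set \<Rightarrow> ((nat \<Rightarrow> nat \<Rightarrow> 'x) \<Rightarrow> enat) \<Rightarrow> ennreal" where
  "ExpT K P0 P1 A Tk = (\<integral>\<^sup>+ \<omega>. ennreal_of_enat (Tk \<omega>) \<partial>PA K P0 P1 A)"

definition Lopt :: "nat \<Rightarrow> (nat \<Rightarrow> 'x measure) \<Rightarrow> (nat \<Rightarrow> (nat \<Rightarrow> 'x) measure)
     \<Rightarrow> (nat \<Rightarrow> (nat \<Rightarrow> 'x) measure) \<Rightarrow> real \<Rightarrow> real \<Rightarrow> nat set set \<Rightarrow> nat \<Rightarrow> nat set \<Rightarrow> ennreal" where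
  "Lopt K M P0 P1 \<alpha> \<beta> PS k A =
     (INF TD \<in> {(T, D). in_Delta K M P0 P1 \<alpha> \<beta> PS T D}. ExpT K P0 P1 A (fst TD k))"

definition Pi_lu :: "nat \<Rightarrow> nat \<Rightarrow> nat \<Rightarrow> nat set set" where
  "Pi_lu K l u = {A. A \<subseteq> {1..K} \<and> l \<le> card A \<and> card A \<le> u}"

text \<open>m-th largest value of x 1, ..., x K (m = 1 gives the maximum).\<close>
definition kth_largest :: "nat \<Rightarrow> (nat \<Rightarrow> real) \<Rightarrow> nat \<Rightarrow> real" where
  "kth_largest K x m = rev (sort (map x [1..<Suc K])) ! (m - 1)"

definition first_time :: "(nat \<Rightarrow> bool) \<Rightarrow> enat" where
  "first_time P = (if \<exists>n\<ge>1. P n then enat (LEAST n. 1 \<le> n \<and> P n) else \<infinity>)"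

text \<open>llr k n x: the LLR lambda_k(n) evaluated on the path x of stream k.\<close>
definition hatT1 :: "nat \<Rightarrow> nat \<Rightarrow> nat \<Rightarrow> (nat \<Rightarrow> nat \<Rightarrow> (nat \<Rightarrow> 'x) \<Rightarrow> real)
     \<Rightarrow> real \<Rightarrow> real \<Rightarrow> nat \<Rightarrow> (nat \<Rightarrow> nat \<Rightarrow> 'x) \<Rightarrow> enat" where
  "hatT1 K l u llr a c k \<omega> = first_time (\<lambda>n.
     if l = u then llr k n (\<omega> k) \<ge> kth_largest K (\<lambda>j. llr j n (\<omega> j)) (l + 1) + c
     else llr k n (\<omega> k) \<ge> min a (kth_largest K (\<lambda>j. llr j n (\<omega> j)) (l + 1) + c))"

definition hatT2 :: "nat \<Rightarrow> nat \<Rightarrow> nat \<Rightarrow> (nat \<Rightarrow> nat \<Rightarrow> (nat \<Rightarrow> 'x) \<Rightarrow> real)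
     \<Rightarrow> real \<Rightarrow> real \<Rightarrow> nat \<Rightarrow> (nat \<Rightarrow> nat \<Rightarrow> 'x) \<Rightarrow> enat" where
  "hatT2 K l u llr b d k \<omega> = first_time (\<lambda>n.
     if l = u then llr k n (\<omega> k) \<le> kth_largest K (\<lambda>j. llr j n (\<omega> j)) u - d
     else llr k n (\<omega> k) \<le> max (- b) (kth_largest K (\<lambda>j. llr j n (\<omega> j)) u - d))"

definition hatT :: "nat \<Rightarrow> nat \<Rightarrow> nat \<Rightarrow> (nat \<Rightarrow> nat \<Rightarrow> (nat \<Rightarrow> 'x) \<Rightarrow> real)
     \<Rightarrow> real \<Rightarrow> real \<Rightarrow> real \<Rightarrow> real \<Rightarrow> nat \<Rightarrow> (nat \<Rightarrow> nat \<Rightarrow> 'x) \<Rightarrow> enat" where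
  "hatT K l u llr a b c d k \<omega> = min (hatT1 K l u llr a c k \<omega>) (hatT2 K l u llr b d k \<omega>)"

definition hatD :: "nat \<Rightarrow> nat \<Rightarrow> nat \<Rightarrow> (nat \<Rightarrow> nat \<Rightarrow> (nat \<Rightarrow> 'x) \<Rightarrow> real)
     \<Rightarrow> real \<Rightarrow> real \<Rightarrow> real \<Rightarrow> real \<Rightarrow> nat \<Rightarrow> (nat \<Rightarrow> nat \<Rightarrow> 'x) \<Rightarrow> bool" where
  "hatD K l u llr a b c d k \<omega> \<longleftrightarrow> hatT K l u llr a b c d k \<omega> = hatT1 K l u llr a c k \<omega>"

text \<open>calI A = min over i in A of I i; calJ A = min over j in [K] - A of J j.
  (Only used where the index set is nonempty.)\<close>
definition calI :: "(nat \<Rightarrow> real) \<Rightarrow> nat set \<Rightarrow> real" where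
  "calI I A = Min (I ` A)"

definition calJ :: "nat \<Rightarrow> (nat \<Rightarrow> real) \<Rightarrow> nat set \<Rightarrow> real" where
  "calJ K J A = Min (J ` ({1..K} - A))"

end

theory Submission
  imports Defs "HOL-Probability.Conditional_Expectation"
begin

text \<open>
  Upper bound: as long as no stream's log-likelihood ratio \<open>\<lambda>\<^sub>k(n)\<close> lags behind its drift
  (\<open>I\<^sub>k n\<close> for signals, \<open>-J\<^sub>k n\<close> for noise) by more than \<open>\<epsilon> n\<close>, the statistic that the
  stopping rule of a signal \<open>i\<close> compares with its threshold grows at least like \<open>(R - \<epsilon>) n\<close>,
  where \<open>R = I\<^sub>i + \<J>\<^sub>A 1{|A| = l}\<close>. Hence \<open>P\<^sub>A(T\<^sub>i > n)\<close> is eventually dominated by the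
  probabilities of the lagging events, which are summable by complete convergence, and
  \<open>E\<^sub>A[T\<^sub>i] \<le> |log \<alpha>|/(R - \<epsilon>) + O(1)\<close>.

  Lower bound: for an arbitrary procedure in \<open>\<Delta>(\<alpha>, \<beta>, \<Pi>)\<close>, change measure from \<open>P\<^sub>A\<close> to
  the least favourable alternative \<open>A'\<close> (remove \<open>i\<close> and, if \<open>|A| = l\<close>, add the noise stream
  with the smallest \<open>J\<close>), whose log-likelihood ratio \<open>\<Lambda>\<^sub>n\<close> against \<open>P\<^sub>A\<close> has drift \<open>R\<close>.
  Wald's argument gives \<open>P\<^sub>A(T\<^sub>i \<le> N) \<le> \<beta> + e\<^sup>L \<alpha> + P\<^sub>A(max\<^sub>n\<^sub>\<le>\<^sub>N \<Lambda>\<^sub>n \<ge> L)\<close>, and the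
  choice \<open>N \<approx> (1 - \<epsilon>)|log \<alpha>|/((1 + \<epsilon>) R)\<close>, \<open>L = (1 + \<epsilon>) R N\<close> makes the right-hand side
  vanish, so \<open>E\<^sub>A[T\<^sub>i] \<ge> N (1 - o(1))\<close>. Noise streams are symmetric, with the roles of
  \<open>\<alpha>, I\<close> and \<open>\<beta>, J\<close> exchanged.
\<close>

section \<open>Filtrations\<close>

lemma space_stream_filt: "space (stream_filt M k n) = space (strm_path_space M k)"
  by (simp add: stream_filt_def)

lemma measurable_prefix:
  "(\<lambda>x. restrict x {..<n}) \<in> measurable (strm_path_space M k) (\<Pi>\<^sub>M t\<in>{..<n}. M k)"
  unfolding strm_path_space_def by (rule measurable_restrict_subset) simp

lemma sets_stream_filt_subset: "sets (stream_filt M k n) \<subseteq> sets (strm_path_space M k)"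
  unfolding stream_filt_def by (rule sets_image_in_sets[OF refl measurable_prefix])

lemma space_joint_space: "space (joint_space K M) = (\<Pi>\<^sub>E k\<in>{1..K}. space (strm_path_space M k))"
  by (simp add: joint_space_def space_PiM)

lemma measurable_joint_prefix:
  "(\<lambda>\<omega>. \<lambda>k\<in>{1..K}. restrict (\<omega> k) {..<n})
     \<in> measurable (joint_space K M) (\<Pi>\<^sub>M k\<in>{1..K}. \<Pi>\<^sub>M t\<in>{..<n}. M k)"
proof (rule measurable_restrict)
  fix k assume k: "k \<in> {1..K}"
  show "(\<lambda>\<omega>. restrict (\<omega> k) {..<n}) \<in> measurable (joint_space K M) (\<Pi>\<^sub>M t\<in>{..<n}. M k)"
    unfolding joint_space_def
    by (rule measurable_compose[OF measurable_component_singleton[OF k] measurable_prefix])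
qed

lemma sets_joint_filt_subset: "sets (joint_filt K M n) \<subseteq> sets (joint_space K M)"
  unfolding joint_filt_def by (rule sets_image_in_sets[OF refl measurable_joint_prefix])

lemma space_joint_filt: "space (joint_filt K M n) = space (joint_space K M)"
  by (simp add: joint_filt_def)

lemma measurable_joint_prefix_filt:
  "(\<lambda>\<omega>. \<lambda>k\<in>{1..K}. restrict (\<omega> k) {..<n})
     \<in> measurable (joint_filt K M n) (\<Pi>\<^sub>M k\<in>{1..K}. \<Pi>\<^sub>M t\<in>{..<n}. M k)"
  unfolding joint_filt_def
  by (rule measurable_vimage_algebra1)
    (use measurable_joint_prefix[where K=K and M=M and n=n] in \<open>auto simp: measurable_def\<close>)

lemma measurable_stream_prefix_filt:
  assumes k: "k \<in> {1..K}"
  shows "(\<lambda>\<omega>. restrict (\<omega> k) {..<n}) \<in> measurable (joint_filt K M n) (\<Pi>\<^sub>M t\<in>{..<n}. M k)"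
  using measurable_compose[OF measurable_joint_prefix_filt measurable_component_singleton[OF k]] k
  by simp

lemma measurable_component_joint_filt:
  assumes k: "k \<in> {1..K}"
  shows "(\<lambda>\<omega>. \<omega> k) \<in> measurable (joint_filt K M n) (stream_filt M k n)"
  unfolding stream_filt_def
  by (rule measurable_vimage_algebra2)
    (use k measurable_stream_prefix_filt[OF k] in \<open>auto simp: space_joint_filt space_joint_space\<close>)

lemma sets_joint_filt_mono:
  assumes "m \<le> n"
  shows "sets (joint_filt K M m) \<subseteq> sets (joint_filt K M n)"
proof -
  have "(\<lambda>\<omega>. \<lambda>k\<in>{1..K}. restrict (\<omega> k) {..<m})
          \<in> measurable (joint_filt K M n) (\<Pi>\<^sub>M k\<in>{1..K}. \<Pi>\<^sub>M t\<in>{..<m}. M k)"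
  proof (rule measurable_restrict)
    fix k assume k: "k \<in> {1..K}"
    from measurable_compose[OF measurable_stream_prefix_filt[OF k, where M=M and n=n]
        measurable_restrict_subset[of "{..<m}" "{..<n}"]]
    show "(\<lambda>\<omega>. restrict (\<omega> k) {..<m}) \<in> measurable (joint_filt K M n) (\<Pi>\<^sub>M t\<in>{..<m}. M k)"
      using assms by (simp add: Int_absorb1)
  qed
  then show ?thesis unfolding joint_filt_def[of K M m]
    by (intro sets_image_in_sets) (auto simp: space_joint_filt)
qed

definition prefix_cylinders :: "nat \<Rightarrow> (nat \<Rightarrow> 'x measure) \<Rightarrow> nat \<Rightarrow> (nat \<Rightarrow> nat \<Rightarrow> 'x) set set" where
  "prefix_cylinders K M n =
     {(\<lambda>\<omega>. \<lambda>k\<in>{1..K}. restrict (\<omega> k) {..<n}) -` (\<Pi>\<^sub>E k\<in>{1..K}. X k) \<inter> space (joint_space K M) | X.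
        (\<forall>k. X k \<in> sets (\<Pi>\<^sub>M t\<in>{..<n}. M k)) \<and> finite {k. X k \<noteq> space (\<Pi>\<^sub>M t\<in>{..<n}. M k)}}"

lemma sets_joint_filt_eq_sigma_sets:
  "sets (joint_filt K M n) = sigma_sets (space (joint_space K M)) (prefix_cylinders K M n)"
proof -
  let ?Mk = "\<lambda>k. \<Pi>\<^sub>M t\<in>{..<n}. M k"
  let ?\<Omega> = "space (joint_space K M)"
  let ?pre = "\<lambda>\<omega>. \<lambda>k\<in>{1..K}. restrict (\<omega> k) {..<n}"
  let ?G = "{(\<Pi>\<^sub>E k\<in>{1..K}. X k) | X. (\<forall>k. X k \<in> sets (?Mk k)) \<and> finite {k. X k \<noteq> space (?Mk k)}}"
  let ?E = "\<Pi>\<^sub>E k\<in>{1..K}. space (?Mk k)"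
  have G: "?G \<subseteq> Pow ?E"
    by (auto simp: PiE_iff dest: sets.sets_into_space)
  have "sets (\<Pi>\<^sub>M k\<in>{1..K}. ?Mk k) = sets (sigma ?E ?G)"
    using sets_PiM_finite G by (simp add: sets_measure_of)
  then have "joint_filt K M n = vimage_algebra ?\<Omega> ?pre (sigma ?E ?G)"
    unfolding joint_filt_def by (rule vimage_algebra_cong[OF refl refl])
  also have "\<dots> = sigma ?\<Omega> {?pre -` A \<inter> ?\<Omega> | A. A \<in> ?G}"
    using measurable_space[OF measurable_joint_prefix[where K=K and M=M and n=n]]
    by (intro vimage_algebra_sigma[OF G]) (auto simp: space_PiM)
  finally have "sets (joint_filt K M n) = sets (sigma ?\<Omega> {?pre -` A \<inter> ?\<Omega> | A. A \<in> ?G})"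
    by simp
  also have "\<dots> = sigma_sets ?\<Omega> {?pre -` A \<inter> ?\<Omega> | A. A \<in> ?G}"
    by (rule sets_measure_of) blast
  also have "{?pre -` A \<inter> ?\<Omega> | A. A \<in> ?G} = prefix_cylinders K M n"
    unfolding prefix_cylinders_def by blast
  finally show ?thesis .
qed

lemma prefix_cylinders_subset: "prefix_cylinders K M n \<subseteq> sets (joint_filt K M n)"
  unfolding sets_joint_filt_eq_sigma_sets by (auto intro: sigma_sets.Basic)

lemma space_in_prefix_cylinders: "space (joint_space K M) \<in> prefix_cylinders K M n"
proof -
  have "space (joint_space K M) = (\<lambda>\<omega>. \<lambda>k\<in>{1..K}. restrict (\<omega> k) {..<n})
           -` (\<Pi>\<^sub>E k\<in>{1..K}. space (\<Pi>\<^sub>M t\<in>{..<n}. M k)) \<inter> space (joint_space K M)"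
    using measurable_space[OF measurable_joint_prefix[where K=K and M=M and n=n]]
    by (auto simp: space_PiM)
  then show ?thesis
    unfolding prefix_cylinders_def by (intro CollectI exI[where x="\<lambda>k. space (\<Pi>\<^sub>M t\<in>{..<n}. M k)"]) auto
qed

lemma Int_stable_prefix_cylinders: "Int_stable (prefix_cylinders K M n)"
proof (rule Int_stableI)
  let ?Mk = "\<lambda>k. \<Pi>\<^sub>M t\<in>{..<n}. M k"
  fix S1 S2 assume "S1 \<in> prefix_cylinders K M n" "S2 \<in> prefix_cylinders K M n"
  obtain X where
    S1: "S1 = (\<lambda>\<omega>. \<lambda>k\<in>{1..K}. restrict (\<omega> k) {..<n}) -` (\<Pi>\<^sub>E k\<in>{1..K}. X k) \<inter> space (joint_space K M)"
      and X: "\<forall>k. X k \<in> sets (?Mk k)" "finite {k. X k \<noteq> space (?Mk k)}"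
    using \<open>S1 \<in> prefix_cylinders K M n\<close> unfolding prefix_cylinders_def by auto
  obtain Y where
    S2: "S2 = (\<lambda>\<omega>. \<lambda>k\<in>{1..K}. restrict (\<omega> k) {..<n}) -` (\<Pi>\<^sub>E k\<in>{1..K}. Y k) \<inter> space (joint_space K M)"
      and Y: "\<forall>k. Y k \<in> sets (?Mk k)" "finite {k. Y k \<noteq> space (?Mk k)}"
    using \<open>S2 \<in> prefix_cylinders K M n\<close> unfolding prefix_cylinders_def by auto
  have "S1 \<inter> S2 = (\<lambda>\<omega>. \<lambda>k\<in>{1..K}. restrict (\<omega> k) {..<n})
                    -` (\<Pi>\<^sub>E k\<in>{1..K}. X k \<inter> Y k) \<inter> space (joint_space K M)"
    unfolding S1 S2 PiE_Int[symmetric] by auto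
  moreover have "finite {k. X k \<inter> Y k \<noteq> space (?Mk k)}"
    by (rule finite_subset[OF _ finite_UnI[OF X(2) Y(2)]]) auto
  ultimately show "S1 \<inter> S2 \<in> prefix_cylinders K M n"
    unfolding prefix_cylinders_def using X(1) Y(1)
    by (intro CollectI exI[where x="\<lambda>k. X k \<inter> Y k"]) auto
qed

lemma prefix_cylinder_eq_PiE:
  "(\<lambda>\<omega>. \<lambda>k\<in>{1..K}. restrict (\<omega> k) {..<n}) -` (\<Pi>\<^sub>E k\<in>{1..K}. X k) \<inter> space (joint_space K M)
     = (\<Pi>\<^sub>E k\<in>{1..K}. (\<lambda>x. restrict x {..<n}) -` X k \<inter> space (strm_path_space M k))"
  by (auto simp: space_joint_space PiE_iff)

section \<open>Order statistics\<close>

lemma length_filter_map_upt: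
  "length (filter P (map x [1..<Suc K])) = card {k\<in>{1..K}. P (x k)}"
proof -
  have "length (filter P (map x [1..<Suc K])) = length (filter (\<lambda>k. P (x k)) [1..<Suc K])"
    by (simp add: filter_map comp_def)
  also have "\<dots> = card (set (filter (\<lambda>k. P (x k)) [1..<Suc K]))"
    by (rule distinct_card[symmetric]) simp
  also have "set (filter (\<lambda>k. P (x k)) [1..<Suc K]) = {k\<in>{1..K}. P (x k)}" by auto
  finally show ?thesis .
qed

lemma length_filter_rev_sort: "length (filter P (rev (sort xs))) = length (filter P xs)"
proof -
  have "mset (filter P (rev (sort xs))) = mset (filter P xs)" by (simp add: mset_filter)
  then show ?thesis by (metis size_mset)
qed

lemma rev_sort_nth_antimono:
  fixes xs :: "real list"
  assumes "i \<le> j" "j < length xs"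
  shows "rev (sort xs) ! j \<le> rev (sort xs) ! i"
proof -
  have "rev (sort xs) ! j = sort xs ! (length xs - Suc j)" using assms by (simp add: rev_nth)
  moreover have "rev (sort xs) ! i = sort xs ! (length xs - Suc i)" using assms by (simp add: rev_nth)
  ultimately show ?thesis using assms by (simp add: sorted_nth_mono)
qed

lemma card_ge_kth_largest:
  assumes "1 \<le> m" "m \<le> K"
  shows "m \<le> card {k\<in>{1..K}. kth_largest K x m \<le> x k}"
proof -
  define ys where "ys = rev (sort (map x [1..<Suc K]))"
  define v where "v = ys ! (m - 1)"
  have "{..<m} \<subseteq> {i. i < length ys \<and> v \<le> ys ! i}"
    using assms unfolding v_def ys_def by (auto intro!: rev_sort_nth_antimono)
  then have "m \<le> card {i. i < length ys \<and> v \<le> ys ! i}"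
    by (metis card_lessThan card_mono finite_Collect_conjI finite_Collect_less_nat)
  also have "\<dots> = length (filter (\<lambda>y. v \<le> y) ys)" by (simp add: length_filter_conv_card)
  also have "\<dots> = card {k\<in>{1..K}. v \<le> x k}"
    unfolding ys_def length_filter_rev_sort length_filter_map_upt ..
  finally show ?thesis by (simp add: v_def ys_def kth_largest_def)
qed

lemma card_le_kth_largest:
  assumes "1 \<le> m" "m \<le> K"
  shows "K - m + 1 \<le> card {k\<in>{1..K}. x k \<le> kth_largest K x m}"
proof -
  define ys where "ys = rev (sort (map x [1..<Suc K]))"
  define v where "v = ys ! (m - 1)"
  have "{m-1..<K} \<subseteq> {i. i < length ys \<and> ys ! i \<le> v}"
    using assms unfolding v_def ys_def by (auto intro!: rev_sort_nth_antimono)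
  then have "card {m-1..<K} \<le> card {i. i < length ys \<and> ys ! i \<le> v}"
    by (intro card_mono) auto
  then have "K - m + 1 \<le> card {i. i < length ys \<and> ys ! i \<le> v}"
    using assms by simp
  also have "\<dots> = length (filter (\<lambda>y. y \<le> v) ys)" by (simp add: length_filter_conv_card)
  also have "\<dots> = card {k\<in>{1..K}. x k \<le> v}"
    unfolding ys_def length_filter_rev_sort length_filter_map_upt ..
  finally show ?thesis by (simp add: v_def ys_def kth_largest_def)
qed

lemma exists_outside_ge_kth_largest:
  assumes "A \<subseteq> {1..K}" "card A = l" "l < K"
  shows "\<exists>j\<in>{1..K} - A. kth_largest K x (l + 1) \<le> x j"
proof (rule ccontr)
  assume "\<not> ?thesis"
  then have "{k\<in>{1..K}. kth_largest K x (l + 1) \<le> x k} \<subseteq> A" by auto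
  then have "card {k\<in>{1..K}. kth_largest K x (l + 1) \<le> x k} \<le> l"
    using assms by (metis card_mono finite_atLeastAtMost finite_subset)
  with card_ge_kth_largest[of "l + 1" K x] assms show False by simp
qed

lemma exists_inside_le_kth_largest:
  assumes "A \<subseteq> {1..K}" "card A = u" "1 \<le> u" "u \<le> K"
  shows "\<exists>i\<in>A. x i \<le> kth_largest K x u"
proof (rule ccontr)
  assume "\<not> ?thesis"
  then have "card {k\<in>{1..K}. x k \<le> kth_largest K x u} \<le> card ({1..K} - A)"
    by (intro card_mono) auto
  also have "\<dots> = K - u" using assms by (simp add: card_Diff_subset finite_subset)
  finally show False using card_le_kth_largest[of u K x] assms by simp
qed

section \<open>The product law \<open>P\<^sub>A\<close>\<close>

definition stream_law :: "(nat \<Rightarrow> 'a measure) \<Rightarrow> (nat \<Rightarrow> 'a measure) \<Rightarrow> nat set \<Rightarrow> nat \<Rightarrow> 'a measure" where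
  "stream_law P0 P1 A k = (if k \<in> A then P1 k else P0 k)"

lemma PA_eq_PiM_stream_law: "PA K P0 P1 A = (\<Pi>\<^sub>M k\<in>{1..K}. stream_law P0 P1 A k)"
  by (simp add: PA_def stream_law_def)

locale stream_laws =
  fixes K :: nat and M :: "nat \<Rightarrow> 'x measure" and P0 P1 :: "nat \<Rightarrow> (nat \<Rightarrow> 'x) measure"
  assumes laws: "\<And>k. k \<in> {1..K} \<Longrightarrow> prob_space (P0 k) \<and> prob_space (P1 k) \<and>
                 sets (P0 k) = sets (strm_path_space M k) \<and> sets (P1 k) = sets (strm_path_space M k)"
begin

lemma sets_P0: "k \<in> {1..K} \<Longrightarrow> sets (P0 k) = sets (strm_path_space M k)"
  and sets_P1: "k \<in> {1..K} \<Longrightarrow> sets (P1 k) = sets (strm_path_space M k)"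
  using laws by blast+

lemma space_P0: "k \<in> {1..K} \<Longrightarrow> space (P0 k) = space (strm_path_space M k)"
  and space_P1: "k \<in> {1..K} \<Longrightarrow> space (P1 k) = space (strm_path_space M k)"
  by (metis sets_eq_imp_space_eq sets_P0, metis sets_eq_imp_space_eq sets_P1)

lemma prob_space_stream_law: "k \<in> {1..K} \<Longrightarrow> prob_space (stream_law P0 P1 A k)"
  using laws by (simp add: stream_law_def)

lemma sets_stream_law: "k \<in> {1..K} \<Longrightarrow> sets (stream_law P0 P1 A k) = sets (strm_path_space M k)"
  using laws by (simp add: stream_law_def)

lemma sets_PA: "sets (PA K P0 P1 A) = sets (joint_space K M)"
  unfolding PA_eq_PiM_stream_law joint_space_def
  by (rule sets_PiM_cong) (auto simp: sets_stream_law)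

lemma space_PA: "space (PA K P0 P1 A) = space (joint_space K M)"
  by (rule sets_eq_imp_space_eq[OF sets_PA])

lemma prob_space_PA: "prob_space (PA K P0 P1 A)"
  unfolding PA_eq_PiM_stream_law by (rule prob_space_PiM) (simp add: prob_space_stream_law)

lemma emeasure_PA_component:
  assumes k: "k \<in> {1..K}" and S: "S \<in> sets (strm_path_space M k)"
  shows "emeasure (PA K P0 P1 A) {\<omega>\<in>space (PA K P0 P1 A). \<omega> k \<in> S} = emeasure (stream_law P0 P1 A k) S"
proof -
  have "emeasure (stream_law P0 P1 A k) S
          = emeasure (distr (PA K P0 P1 A) (stream_law P0 P1 A k) (\<lambda>\<omega>. \<omega> k)) S"
    unfolding PA_eq_PiM_stream_law
    using distr_PiM_component[of "{1..K}" "stream_law P0 P1 A" k] k prob_space_stream_law by simp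
  also have "\<dots> = emeasure (PA K P0 P1 A) ((\<lambda>\<omega>. \<omega> k) -` S \<inter> space (PA K P0 P1 A))"
    by (rule emeasure_distr) (use k S sets_stream_law in \<open>auto simp: PA_eq_PiM_stream_law\<close>)
  finally show ?thesis by (simp add: Int_def conj_commute)
qed

lemma measure_PA_component:
  assumes k: "k \<in> {1..K}" and S: "S \<in> sets (strm_path_space M k)"
  shows "measure (PA K P0 P1 A) {\<omega>\<in>space (PA K P0 P1 A). \<omega> k \<in> S} = measure (stream_law P0 P1 A k) S"
  using emeasure_PA_component[OF k S] by (simp add: measure_def)

lemma AE_PA_component:
  assumes k: "k \<in> {1..K}" and "AE x in stream_law P0 P1 A k. P x"
  shows "AE \<omega> in PA K P0 P1 A. P (\<omega> k)"
  unfolding PA_eq_PiM_stream_law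
  by (rule AE_PiM_component) (use assms prob_space_stream_law in auto)

end

section \<open>Expectations of stopping times\<close>

lemma measurable_enat_of_le_sets:
  assumes le: "\<And>n. {\<omega>\<in>space M. T \<omega> \<le> enat n} \<in> sets M"
  shows "T \<in> measurable M (count_space UNIV)"
proof -
  have lt: "{\<omega>\<in>space M. T \<omega> < enat n} = (\<Union>m\<in>{..<n}. {\<omega>\<in>space M. T \<omega> \<le> enat m})" for n
  proof safe
    fix \<omega> assume "\<omega> \<in> space M" "T \<omega> < enat n"
    then obtain m where "T \<omega> = enat m" "m < n" by (cases "T \<omega>") auto
    then show "\<omega> \<in> (\<Union>m\<in>{..<n}. {\<omega>\<in>space M. T \<omega> \<le> enat m})" using \<open>\<omega> \<in> space M\<close> by auto
  qed (auto intro: le_less_trans)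
  have "T -` {x} \<inter> space M \<in> sets M" for x
  proof (cases x)
    case (enat n)
    then have "T -` {x} \<inter> space M = {\<omega>\<in>space M. T \<omega> \<le> enat n} - {\<omega>\<in>space M. T \<omega> < enat n}"
      by auto
    then show ?thesis using le lt by auto
  next
    case infinity
    have "(y = \<infinity>) \<longleftrightarrow> (\<forall>n. \<not> y \<le> enat n)" for y :: enat
      by (cases y) auto
    then have "T -` {x} \<inter> space M = space M - (\<Union>n. {\<omega>\<in>space M. T \<omega> \<le> enat n})"
      using infinity by blast
    then show ?thesis using le by auto
  qed
  then show ?thesis by (subst measurable_count_space_eq_countable) auto
qed

lemma nn_integral_enat_le_of_tail_cover:
  assumes "prob_space \<mu>" and T: "T \<in> measurable \<mu> (count_space UNIV)" and F: "finite F"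
    and B: "\<And>f t. f \<in> F \<Longrightarrow> B f t \<in> sets \<mu>"
    and summable: "\<And>f. f \<in> F \<Longrightarrow> summable (\<lambda>t. measure \<mu> (B f t))"
    and cover: "\<And>t. t \<ge> N\<^sub>0 \<Longrightarrow> {\<omega>\<in>space \<mu>. enat t < T \<omega>} \<subseteq> (\<Union>f\<in>F. B f t)"
  shows "(\<integral>\<^sup>+\<omega>. ennreal_of_enat (T \<omega>) \<partial>\<mu>) \<le> ennreal (real N\<^sub>0 + (\<Sum>f\<in>F. \<Sum>t. measure \<mu> (B f t)))"
proof -
  interpret prob_space \<mu> by fact
  define h where "h t = (if t \<in> {..<N\<^sub>0} then 1 else 0) + (\<Sum>f\<in>F. measure \<mu> (B f t))" for t
  have "(\<lambda>t. if t \<in> {..<N\<^sub>0} then 1::real else 0) sums (real N\<^sub>0)"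
    using sums_If_finite_set[of "{..<N\<^sub>0}" "\<lambda>_. 1::real"] by simp
  moreover have "(\<lambda>t. \<Sum>f\<in>F. measure \<mu> (B f t)) sums (\<Sum>f\<in>F. \<Sum>t. measure \<mu> (B f t))"
    using sums_sum[of F "\<lambda>f t. measure \<mu> (B f t)"] summable by (simp add: summable_sums)
  ultimately have h_sums: "h sums (real N\<^sub>0 + (\<Sum>f\<in>F. \<Sum>t. measure \<mu> (B f t)))"
    unfolding h_def by (rule sums_add)
  have h_nonneg: "0 \<le> h t" for t
    unfolding h_def by (auto intro!: add_nonneg_nonneg sum_nonneg)
  have tail_le: "emeasure \<mu> {\<omega>\<in>space \<mu>. enat t < T \<omega>} \<le> ennreal (h t)" for t
  proof (cases "t < N\<^sub>0")
    case True
    then have "ennreal 1 \<le> ennreal (h t)" unfolding h_def by (intro ennreal_leI) (auto intro!: sum_nonneg)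
    moreover have "emeasure \<mu> {\<omega>\<in>space \<mu>. enat t < T \<omega>} \<le> 1" by (rule emeasure_le_1)
    ultimately show ?thesis by (metis ennreal_1 order_trans)
  next
    case False
    have "emeasure \<mu> {\<omega>\<in>space \<mu>. enat t < T \<omega>} \<le> emeasure \<mu> (\<Union>f\<in>F. B f t)"
      using False cover[of t] B F by (intro emeasure_mono) auto
    also have "\<dots> \<le> (\<Sum>f\<in>F. emeasure \<mu> (B f t))"
      using B F by (intro emeasure_subadditive_finite) auto
    also have "\<dots> = ennreal (\<Sum>f\<in>F. measure \<mu> (B f t))"
      using B by (simp add: emeasure_eq_measure sum_ennreal)
    also have "\<dots> \<le> ennreal (h t)" unfolding h_def by (auto intro!: ennreal_leI)
    finally show ?thesis .
  qed
  have "(\<integral>\<^sup>+\<omega>. ennreal_of_enat (T \<omega>) \<partial>\<mu>) = (\<Sum>t. emeasure \<mu> {\<omega>\<in>space \<mu>. enat t < T \<omega>})"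
    using nn_integral_enat_function[OF T] by simp
  also have "\<dots> \<le> (\<Sum>t. ennreal (h t))"
    by (intro suminf_le tail_le summableI)
  also have "\<dots> = ennreal (suminf h)"
    using h_sums by (intro suminf_ennreal2) (auto simp: sums_iff h_nonneg)
  also have "suminf h = real N\<^sub>0 + (\<Sum>f\<in>F. \<Sum>t. measure \<mu> (B f t))"
    using h_sums by (simp add: sums_iff)
  finally show ?thesis .
qed

lemma nn_integral_enat_ge_mult_prob_gt:
  assumes "prob_space \<mu>" and S: "{\<omega>\<in>space \<mu>. T \<omega> \<le> enat N} \<in> sets \<mu>"
  shows "ennreal (real N * (1 - measure \<mu> {\<omega>\<in>space \<mu>. T \<omega> \<le> enat N}))
           \<le> (\<integral>\<^sup>+\<omega>. ennreal_of_enat (T \<omega>) \<partial>\<mu>)"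
proof -
  interpret prob_space \<mu> by fact
  let ?S = "{\<omega>\<in>space \<mu>. T \<omega> \<le> enat N}"
  have "ennreal (real N * (1 - measure \<mu> ?S)) = of_nat N * emeasure \<mu> (space \<mu> - ?S)"
    using prob_compl[OF S] by (simp add: emeasure_eq_measure ennreal_mult ennreal_of_nat_eq_real_of_nat)
  also have "\<dots> = (\<integral>\<^sup>+\<omega>. of_nat N * indicator (space \<mu> - ?S) \<omega> \<partial>\<mu>)"
    using S by (subst nn_integral_cmult_indicator) auto
  also have "\<dots> \<le> (\<integral>\<^sup>+\<omega>. ennreal_of_enat (T \<omega>) \<partial>\<mu>)"
  proof (intro nn_integral_mono)
    fix \<omega>
    show "of_nat N * indicator (space \<mu> - ?S) \<omega> \<le> ennreal_of_enat (T \<omega>)"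
    proof (cases "\<omega> \<in> space \<mu> - ?S")
      case True
      then have "enat N \<le> T \<omega>" by auto
      then have "ennreal_of_enat (enat N) \<le> ennreal_of_enat (T \<omega>)" by (simp add: of_nat_eq_enat)
      then show ?thesis using True by simp
    qed simp
  qed
  finally show ?thesis .
qed

section \<open>Change of measure between the laws \<open>P\<^sub>A\<close>\<close>

locale llr_model = stream_laws K M P0 P1 for K M and P0 P1 :: "nat \<Rightarrow> (nat \<Rightarrow> 'x) measure" +
  fixes llr :: "nat \<Rightarrow> nat \<Rightarrow> (nat \<Rightarrow> 'x) \<Rightarrow> real"
  assumes llr: "\<And>k n. k \<in> {1..K} \<Longrightarrow> 1 \<le> n \<Longrightarrow>
                 llr k n \<in> borel_measurable (stream_filt M k n) \<and>
                 (\<forall>B\<in>sets (stream_filt M k n).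
                    emeasure (P1 k) B = (\<integral>\<^sup>+ x\<in>B. ennreal (exp (llr k n x)) \<partial>P0 k))"
begin

lemma llr_measurable_filt: "k \<in> {1..K} \<Longrightarrow> 1 \<le> n \<Longrightarrow> llr k n \<in> borel_measurable (stream_filt M k n)"
  using llr by blast

lemma subalgebra_P0: "k \<in> {1..K} \<Longrightarrow> subalgebra (P0 k) (stream_filt M k n)"
  unfolding subalgebra_def using sets_stream_filt_subset[of M k n]
  by (simp add: space_stream_filt space_P0 sets_P0)

lemma subalgebra_P1: "k \<in> {1..K} \<Longrightarrow> subalgebra (P1 k) (stream_filt M k n)"
  unfolding subalgebra_def using sets_stream_filt_subset[of M k n]
  by (simp add: space_stream_filt space_P1 sets_P1)

lemma llr_measurable: "k \<in> {1..K} \<Longrightarrow> 1 \<le> n \<Longrightarrow> llr k n \<in> borel_measurable (strm_path_space M k)"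
  using llr_measurable_filt measurable_from_subalg[OF subalgebra_P0]
  by (metis sets_P0 measurable_cong_sets)

lemma nn_integral_P1_eq_P0_density:
  assumes k: "k \<in> {1..K}" and n: "1 \<le> n" and g: "g \<in> borel_measurable (stream_filt M k n)"
  shows "(\<integral>\<^sup>+x. g x \<partial>P1 k) = (\<integral>\<^sup>+x. ennreal (exp (llr k n x)) * g x \<partial>P0 k)"
proof -
  let ?F = "stream_filt M k n"
  have [measurable]: "llr k n \<in> borel_measurable ?F" using llr_measurable_filt[OF k n] .
  have restr_eq: "restr_to_subalg (P1 k) ?F
                    = density (restr_to_subalg (P0 k) ?F) (\<lambda>x. ennreal (exp (llr k n x)))"
  proof (rule measure_eqI)
    show "sets (restr_to_subalg (P1 k) ?F)
            = sets (density (restr_to_subalg (P0 k) ?F) (\<lambda>x. ennreal (exp (llr k n x))))"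
      using subalgebra_P0[OF k] subalgebra_P1[OF k] by (simp add: sets_restr_to_subalg)
    fix B assume "B \<in> sets (restr_to_subalg (P1 k) ?F)"
    then have B[measurable]: "B \<in> sets ?F" using subalgebra_P1[OF k] by (simp add: sets_restr_to_subalg)
    have "emeasure (density (restr_to_subalg (P0 k) ?F) (\<lambda>x. ennreal (exp (llr k n x)))) B
        = (\<integral>\<^sup>+x. ennreal (exp (llr k n x)) * indicator B x \<partial>restr_to_subalg (P0 k) ?F)"
      using B subalgebra_P0[OF k]
      by (subst emeasure_density) (auto simp: sets_restr_to_subalg measurable_in_subalg)
    also have "\<dots> = (\<integral>\<^sup>+x. ennreal (exp (llr k n x)) * indicator B x \<partial>P0 k)"
      using B by (intro nn_integral_subalgebra2[OF subalgebra_P0[OF k]]) measurable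
    also have "\<dots> = emeasure (P1 k) B" using llr[OF k n] B by simp
    also have "\<dots> = emeasure (restr_to_subalg (P1 k) ?F) B"
      using B subalgebra_P1[OF k] by (simp add: emeasure_restr_to_subalg)
    finally show "emeasure (restr_to_subalg (P1 k) ?F) B
        = emeasure (density (restr_to_subalg (P0 k) ?F) (\<lambda>x. ennreal (exp (llr k n x)))) B"
      by simp
  qed
  have "(\<integral>\<^sup>+x. g x \<partial>P1 k) = (\<integral>\<^sup>+x. g x \<partial>restr_to_subalg (P1 k) ?F)"
    using nn_integral_subalgebra2[OF subalgebra_P1[OF k] g] by simp
  also have "\<dots> = (\<integral>\<^sup>+x. ennreal (exp (llr k n x)) * g x \<partial>restr_to_subalg (P0 k) ?F)"
    unfolding restr_eq using subalgebra_P0[OF k] g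
    by (subst nn_integral_density) (auto simp: measurable_in_subalg)
  also have "\<dots> = (\<integral>\<^sup>+x. ennreal (exp (llr k n x)) * g x \<partial>P0 k)"
    using g by (intro nn_integral_subalgebra2[OF subalgebra_P0[OF k]]) measurable
  finally show ?thesis .
qed

definition llr_sign :: "nat set \<Rightarrow> nat set \<Rightarrow> nat \<Rightarrow> real" where
  "llr_sign A A' k = (if k \<in> A \<and> k \<notin> A' then 1 else if k \<in> A' \<and> k \<notin> A then -1 else 0)"

lemma emeasure_stream_law_eq_density:
  assumes k: "k \<in> {1..K}" and n: "1 \<le> n" and C: "C \<in> sets (stream_filt M k n)"
  shows "emeasure (stream_law P0 P1 A k) C
           = (\<integral>\<^sup>+x. indicator C x * ennreal (exp (llr_sign A A' k * llr k n x)) \<partial>stream_law P0 P1 A' k)"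
proof -
  have [measurable]: "llr k n \<in> borel_measurable (stream_filt M k n)" "C \<in> sets (stream_filt M k n)"
    using llr_measurable_filt[OF k n] C .
  have Cs: "C \<in> sets (strm_path_space M k)" using C sets_stream_filt_subset by blast
  consider "k \<in> A \<longleftrightarrow> k \<in> A'" | "k \<in> A" "k \<notin> A'" | "k \<notin> A" "k \<in> A'" by blast
  then show ?thesis
  proof cases
    case 1
    then have "llr_sign A A' k = 0" "stream_law P0 P1 A k = stream_law P0 P1 A' k"
      by (auto simp: llr_sign_def stream_law_def)
    then show ?thesis using Cs sets_stream_law[OF k] by simp
  next
    case 2
    then have "llr_sign A A' k = 1" "stream_law P0 P1 A k = P1 k" "stream_law P0 P1 A' k = P0 k"
      by (auto simp: llr_sign_def stream_law_def)
    then show ?thesis using llr[OF k n] C by (simp add: mult.commute)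
  next
    case 3
    then have sign: "llr_sign A A' k = -1" "stream_law P0 P1 A k = P0 k" "stream_law P0 P1 A' k = P1 k"
      by (auto simp: llr_sign_def stream_law_def)
    have "(\<integral>\<^sup>+x. indicator C x * ennreal (exp (- llr k n x)) \<partial>P1 k)
        = (\<integral>\<^sup>+x. ennreal (exp (llr k n x)) * (indicator C x * ennreal (exp (- llr k n x))) \<partial>P0 k)"
      by (intro nn_integral_P1_eq_P0_density[OF k n]) measurable
    also have "\<dots> = (\<integral>\<^sup>+x. indicator C x \<partial>P0 k)"
    proof (intro nn_integral_cong)
      fix x
      have "ennreal (exp (llr k n x)) * ennreal (exp (- llr k n x)) = 1"
        by (simp flip: ennreal_mult add: exp_minus)
      then show "ennreal (exp (llr k n x)) * (indicator C x * ennreal (exp (- llr k n x))) = indicator C x"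
        by (metis (no_types, lifting) mult.commute mult.left_commute mult_1)
    qed
    also have "\<dots> = emeasure (P0 k) C" using Cs sets_P0[OF k] by simp
    finally show ?thesis using sign by simp
  qed
qed

definition joint_llr :: "nat set \<Rightarrow> nat set \<Rightarrow> nat \<Rightarrow> (nat \<Rightarrow> nat \<Rightarrow> 'x) \<Rightarrow> real" where
  "joint_llr A A' n \<omega> = (\<Sum>k\<in>{1..K}. llr_sign A A' k * llr k n (\<omega> k))"

lemma component_llr_measurable_filt:
  "k \<in> {1..K} \<Longrightarrow> 1 \<le> n \<Longrightarrow> (\<lambda>\<omega>. llr k n (\<omega> k)) \<in> borel_measurable (joint_filt K M n)"
  by (rule measurable_compose[OF measurable_component_joint_filt llr_measurable_filt])

lemma joint_llr_measurable_filt: "1 \<le> n \<Longrightarrow> joint_llr A A' n \<in> borel_measurable (joint_filt K M n)"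
  unfolding joint_llr_def[abs_def] using component_llr_measurable_filt
  by (intro borel_measurable_sum borel_measurable_times) auto

lemma sets_joint_llr_crossed:
  "{\<omega>\<in>space (joint_space K M). \<exists>n\<in>{1..N}. L \<le> joint_llr A A' n \<omega>} \<in> sets (PA K P0 P1 B)"
proof -
  have "{\<omega>\<in>space (joint_space K M). \<exists>n\<in>{1..N}. L \<le> joint_llr A A' n \<omega>}
          = (\<Union>n\<in>{1..N}. {\<omega>\<in>space (joint_filt K M n). L \<le> joint_llr A A' n \<omega>})"
    by (auto simp: space_joint_filt)
  moreover have "{\<omega>\<in>space (joint_filt K M n). L \<le> joint_llr A A' n \<omega>} \<in> sets (PA K P0 P1 B)"
    if "n \<in> {1..N}" for n
    using joint_llr_measurable_filt[of n A A'] that sets_joint_filt_subset[of K M n]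
    by (auto simp: sets_PA intro: measurable_sets)
  ultimately show ?thesis by auto
qed

text \<open>
  A copy of \<open>stream_law\<close> that is a probability space at every index, as required by
  \<open>product_sigma_finite\<close>; the dummy factors outside \<open>{1..K}\<close> do not enter \<open>P\<^sub>A\<close>.
\<close>
definition stream_law_ext :: "nat set \<Rightarrow> nat \<Rightarrow> (nat \<Rightarrow> 'x) measure" where
  "stream_law_ext A k =
     (if k \<in> {1..K} then stream_law P0 P1 A k else return (count_space UNIV) undefined)"

lemma PA_eq_PiM_stream_law_ext: "PA K P0 P1 A = (\<Pi>\<^sub>M k\<in>{1..K}. stream_law_ext A k)"
  unfolding PA_eq_PiM_stream_law by (rule PiM_cong) (auto simp: stream_law_ext_def)

lemma product_sigma_finite_stream_law_ext: "product_sigma_finite (stream_law_ext A)"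
  unfolding product_sigma_finite_def
  by (auto simp: stream_law_ext_def intro!: prob_space_imp_sigma_finite prob_space_stream_law prob_space_return)

lemma subalgebra_PA_joint_filt: "subalgebra (PA K P0 P1 A) (joint_filt K M n)"
  unfolding subalgebra_def using sets_joint_filt_subset[of K M n]
  by (simp add: space_joint_filt space_PA sets_PA)

lemma emeasure_PA_prefix_cylinder:
  assumes n: "1 \<le> n" and S: "S \<in> prefix_cylinders K M n"
  shows "emeasure (PA K P0 P1 A) S
           = (\<integral>\<^sup>+\<omega>. ennreal (exp (joint_llr A A' n \<omega>)) * indicator S \<omega> \<partial>PA K P0 P1 A')"
proof -
  obtain X where S_eq: "S = (\<lambda>\<omega>. \<lambda>k\<in>{1..K}. restrict (\<omega> k) {..<n}) -` (\<Pi>\<^sub>E k\<in>{1..K}. X k)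
                             \<inter> space (joint_space K M)"
    and X: "\<forall>k. X k \<in> sets (\<Pi>\<^sub>M t\<in>{..<n}. M k)"
    using S unfolding prefix_cylinders_def by blast
  define C where "C k = (\<lambda>x. restrict x {..<n}) -` X k \<inter> space (strm_path_space M k)" for k
  have S_PiE: "S = (\<Pi>\<^sub>E k\<in>{1..K}. C k)" unfolding S_eq C_def by (rule prefix_cylinder_eq_PiE)
  have C_filt: "C k \<in> sets (stream_filt M k n)" for k
    unfolding C_def stream_filt_def using X by (intro in_vimage_algebra) auto
  have C_sets[measurable]: "C k \<in> sets (strm_path_space M k)" for k
    using C_filt sets_stream_filt_subset by blast
  interpret A': product_sigma_finite "stream_law_ext A'" by (rule product_sigma_finite_stream_law_ext)
  interpret A: product_sigma_finite "stream_law_ext A" by (rule product_sigma_finite_stream_law_ext)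
  have "emeasure (PA K P0 P1 A) S = (\<Prod>k\<in>{1..K}. emeasure (stream_law_ext A k) (C k))"
    unfolding PA_eq_PiM_stream_law_ext S_PiE
    by (rule A.emeasure_PiM) (auto simp: stream_law_ext_def sets_stream_law)
  also have "\<dots> = (\<Prod>k\<in>{1..K}.
      \<integral>\<^sup>+x. indicator (C k) x * ennreal (exp (llr_sign A A' k * llr k n x)) \<partial>stream_law_ext A' k)"
    by (intro prod.cong refl) (simp add: stream_law_ext_def emeasure_stream_law_eq_density[OF _ n C_filt])
  also have "\<dots> = (\<integral>\<^sup>+\<omega>. (\<Prod>k\<in>{1..K}.
      indicator (C k) (\<omega> k) * ennreal (exp (llr_sign A A' k * llr k n (\<omega> k)))) \<partial>PA K P0 P1 A')"
    unfolding PA_eq_PiM_stream_law_ext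
  proof (rule A'.product_nn_integral_prod[symmetric])
    fix k assume k: "k \<in> {1..K}"
    have [measurable]: "llr k n \<in> borel_measurable (strm_path_space M k)" by (rule llr_measurable[OF k n])
    have "(\<lambda>x. indicator (C k) x * ennreal (exp (llr_sign A A' k * llr k n x)))
            \<in> borel_measurable (strm_path_space M k)"
      by measurable
    then show "(\<lambda>x. indicator (C k) x * ennreal (exp (llr_sign A A' k * llr k n x)))
                 \<in> borel_measurable (stream_law_ext A' k)"
      using k by (simp add: stream_law_ext_def measurable_cong_sets[OF sets_stream_law[OF k] refl])
  qed simp
  also have "\<dots> = (\<integral>\<^sup>+\<omega>. ennreal (exp (joint_llr A A' n \<omega>)) * indicator S \<omega> \<partial>PA K P0 P1 A')"
  proof (intro nn_integral_cong)
    fix \<omega> assume "\<omega> \<in> space (PA K P0 P1 A')"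
    then have \<omega>: "\<omega> \<in> (\<Pi>\<^sub>E k\<in>{1..K}. space (strm_path_space M k))"
      by (simp add: space_PA space_joint_space)
    have "(\<Prod>k\<in>{1..K}. ennreal (exp (llr_sign A A' k * llr k n (\<omega> k)))) = ennreal (exp (joint_llr A A' n \<omega>))"
      by (subst prod_ennreal) (auto simp: joint_llr_def exp_sum)
    moreover have "(\<Prod>k\<in>{1..K}. indicator (C k) (\<omega> k) :: ennreal) = indicator S \<omega>"
      using \<omega> by (auto simp: S_PiE PiE_iff indicator_def)
    ultimately show "(\<Prod>k\<in>{1..K}. indicator (C k) (\<omega> k) * ennreal (exp (llr_sign A A' k * llr k n (\<omega> k))))
        = ennreal (exp (joint_llr A A' n \<omega>)) * indicator S \<omega>"
      by (simp add: prod.distrib mult.commute)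
  qed
  finally show ?thesis .
qed

lemma emeasure_PA_eq_density:
  assumes n: "1 \<le> n" and E: "E \<in> sets (joint_filt K M n)"
  shows "emeasure (PA K P0 P1 A) E
           = (\<integral>\<^sup>+\<omega>. ennreal (exp (joint_llr A A' n \<omega>)) * indicator E \<omega> \<partial>PA K P0 P1 A')"
proof -
  let ?F = "joint_filt K M n" and ?\<Omega> = "space (joint_space K M)"
  have [measurable]: "joint_llr A A' n \<in> borel_measurable ?F" by (rule joint_llr_measurable_filt[OF n])
  define \<mu> where "\<mu> = restr_to_subalg (PA K P0 P1 A) ?F"
  define \<nu> where "\<nu> = density (restr_to_subalg (PA K P0 P1 A') ?F) (\<lambda>\<omega>. ennreal (exp (joint_llr A A' n \<omega>)))"
  have emeasure_\<nu>: "emeasure \<nu> S = (\<integral>\<^sup>+\<omega>. ennreal (exp (joint_llr A A' n \<omega>)) * indicator S \<omega> \<partial>PA K P0 P1 A')"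
    if S[measurable]: "S \<in> sets ?F" for S
  proof -
    have "emeasure \<nu> S = (\<integral>\<^sup>+\<omega>. ennreal (exp (joint_llr A A' n \<omega>)) * indicator S \<omega>
                             \<partial>restr_to_subalg (PA K P0 P1 A') ?F)"
      unfolding \<nu>_def using subalgebra_PA_joint_filt
      by (subst emeasure_density) (auto simp: sets_restr_to_subalg measurable_in_subalg)
    also have "\<dots> = (\<integral>\<^sup>+\<omega>. ennreal (exp (joint_llr A A' n \<omega>)) * indicator S \<omega> \<partial>PA K P0 P1 A')"
      by (rule nn_integral_subalgebra2[OF subalgebra_PA_joint_filt]) measurable
    finally show ?thesis .
  qed
  have emeasure_\<mu>: "emeasure \<mu> S = emeasure (PA K P0 P1 A) S" if "S \<in> sets ?F" for S
    unfolding \<mu>_def by (rule emeasure_restr_to_subalg[OF subalgebra_PA_joint_filt that])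
  have "\<mu> = \<nu>"
  proof (rule measure_eqI_generator_eq[where E="prefix_cylinders K M n" and \<Omega>="?\<Omega>" and A="\<lambda>_. ?\<Omega>"])
    show "Int_stable (prefix_cylinders K M n)" by (rule Int_stable_prefix_cylinders)
    show "prefix_cylinders K M n \<subseteq> Pow ?\<Omega>" by (auto simp: prefix_cylinders_def)
    show "emeasure \<mu> S = emeasure \<nu> S" if S: "S \<in> prefix_cylinders K M n" for S
    proof -
      have "S \<in> sets ?F" using S prefix_cylinders_subset by blast
      then show ?thesis using emeasure_PA_prefix_cylinder[OF n S, of A A']
        by (simp add: emeasure_\<mu> emeasure_\<nu>)
    qed
    show "sets \<mu> = sigma_sets ?\<Omega> (prefix_cylinders K M n)" "sets \<nu> = sigma_sets ?\<Omega> (prefix_cylinders K M n)"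
      unfolding \<mu>_def \<nu>_def
      by (simp_all add: sets_restr_to_subalg[OF subalgebra_PA_joint_filt] sets_joint_filt_eq_sigma_sets)
    show "range (\<lambda>_. ?\<Omega>) \<subseteq> prefix_cylinders K M n" using space_in_prefix_cylinders by auto
    show "(\<Union>i::nat. ?\<Omega>) = ?\<Omega>" by simp
    show "emeasure \<mu> ?\<Omega> \<noteq> \<infinity>" for i :: nat
    proof -
      have "?\<Omega> \<in> sets ?F" using space_in_prefix_cylinders prefix_cylinders_subset by blast
      then show ?thesis
        using prob_space.emeasure_le_1[OF prob_space_PA, of A ?\<Omega>] by (auto simp: emeasure_\<mu> top_unique)
    qed
  qed
  then show ?thesis using E by (simp add: emeasure_\<mu>[symmetric] emeasure_\<nu>)
qed

lemma emeasure_PA_le_exp_emeasure: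
  assumes n: "1 \<le> n" and E: "E \<in> sets (joint_filt K M n)"
    and below: "\<And>\<omega>. \<omega> \<in> E \<Longrightarrow> joint_llr A A' n \<omega> \<le> L"
  shows "emeasure (PA K P0 P1 A) E \<le> ennreal (exp L) * emeasure (PA K P0 P1 A') E"
proof -
  have "emeasure (PA K P0 P1 A) E
          = (\<integral>\<^sup>+\<omega>. ennreal (exp (joint_llr A A' n \<omega>)) * indicator E \<omega> \<partial>PA K P0 P1 A')"
    by (rule emeasure_PA_eq_density[OF n E])
  also have "\<dots> \<le> (\<integral>\<^sup>+\<omega>. ennreal (exp L) * indicator E \<omega> \<partial>PA K P0 P1 A')"
    using below by (intro nn_integral_mono) (auto simp: indicator_def intro!: ennreal_leI)
  also have "\<dots> = ennreal (exp L) * emeasure (PA K P0 P1 A') E"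
    using E sets_joint_filt_subset by (intro nn_integral_cmult_indicator) (auto simp: sets_PA)
  finally show ?thesis .
qed

lemma decision_event_joint_filt:
  assumes proc: "is_procedure K M P0 P1 T D" and k: "k \<in> {1..K}" and n: "1 \<le> n"
  shows "{\<omega>\<in>space (joint_space K M). D k \<omega> = v \<and> T k \<omega> = enat n} \<in> sets (joint_filt K M n)"
proof -
  let ?\<Omega> = "space (joint_space K M)"
  have T_le: "{\<omega>\<in>?\<Omega>. T k \<omega> \<le> enat m} \<in> sets (joint_filt K M m)"
    and DT_le: "{\<omega>\<in>?\<Omega>. D k \<omega> \<and> T k \<omega> \<le> enat m} \<in> sets (joint_filt K M m)" for m
    using proc k unfolding is_procedure_def by blast+
  have decided: "{\<omega>\<in>?\<Omega>. D k \<omega> = v \<and> T k \<omega> \<le> enat n} \<in> sets (joint_filt K M n)"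
  proof (cases v)
    case False
    then have "{\<omega>\<in>?\<Omega>. D k \<omega> = v \<and> T k \<omega> \<le> enat n}
                 = {\<omega>\<in>?\<Omega>. T k \<omega> \<le> enat n} - {\<omega>\<in>?\<Omega>. D k \<omega> \<and> T k \<omega> \<le> enat n}"
      by auto
    then show ?thesis using T_le[of n] DT_le[of n] by auto
  qed (use DT_le[of n] in simp)
  have earlier: "{\<omega>\<in>?\<Omega>. T k \<omega> \<le> enat (n - 1)} \<in> sets (joint_filt K M n)"
    using T_le[of "n - 1"] sets_joint_filt_mono[of "n - 1" n K M] by auto
  have "x = enat n \<longleftrightarrow> x \<le> enat n \<and> \<not> x \<le> enat (n - 1)" for x
    using n by (cases x) auto
  then have "{\<omega>\<in>?\<Omega>. D k \<omega> = v \<and> T k \<omega> = enat n}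
               = {\<omega>\<in>?\<Omega>. D k \<omega> = v \<and> T k \<omega> \<le> enat n} - {\<omega>\<in>?\<Omega>. T k \<omega> \<le> enat (n - 1)}"
    by auto
  then show ?thesis using decided earlier by auto
qed

text \<open>
  Wald's argument: on \<open>{T\<^sub>k = n, D\<^sub>k = v}\<close> with \<open>\<Lambda>\<^sub>n < L\<close>, the density of \<open>P\<^sub>A\<close> with respect
  to \<open>P\<^sub>A\<^sub>'\<close> on \<open>\<F>(n)\<close> is below \<open>e\<^sup>L\<close>.
\<close>
lemma emeasure_stopped_le:
  assumes proc: "is_procedure K M P0 P1 T D" and k: "k \<in> {1..K}"
  shows "emeasure (PA K P0 P1 A) {\<omega>\<in>space (joint_space K M). T k \<omega> \<le> enat N}
     \<le> emeasure (PA K P0 P1 A) {\<omega>\<in>space (joint_space K M). D k \<omega> \<noteq> v}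
       + ennreal (exp L) * emeasure (PA K P0 P1 A') {\<omega>\<in>space (joint_space K M). D k \<omega> = v}
       + emeasure (PA K P0 P1 A) {\<omega>\<in>space (joint_space K M). \<exists>n\<in>{1..N}. L \<le> joint_llr A A' n \<omega>}"
proof -
  let ?\<Omega> = "space (joint_space K M)" and ?P = "PA K P0 P1 A" and ?P' = "PA K P0 P1 A'"
  define E where "E n = {\<omega>\<in>?\<Omega>. D k \<omega> = v \<and> T k \<omega> = enat n \<and> joint_llr A A' n \<omega> < L}" for n
  define wrong where "wrong = {\<omega>\<in>?\<Omega>. D k \<omega> \<noteq> v}"
  define right where "right = {\<omega>\<in>?\<Omega>. D k \<omega> = v}"
  define crossed where "crossed = {\<omega>\<in>?\<Omega>. \<exists>n\<in>{1..N}. L \<le> joint_llr A A' n \<omega>}"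
  have E_filt: "E n \<in> sets (joint_filt K M n)" if n: "1 \<le> n" for n
  proof -
    have "E n = {\<omega>\<in>?\<Omega>. D k \<omega> = v \<and> T k \<omega> = enat n}
                  \<inter> {\<omega>\<in>space (joint_filt K M n). joint_llr A A' n \<omega> < L}"
      by (auto simp: E_def space_joint_filt)
    moreover have "{\<omega>\<in>space (joint_filt K M n). joint_llr A A' n \<omega> < L} \<in> sets (joint_filt K M n)"
      using joint_llr_measurable_filt[OF n, of A A'] by measurable
    ultimately show ?thesis using decision_event_joint_filt[OF proc k n] by auto
  qed
  have E_sets: "E n \<in> sets ?P" "E n \<in> sets ?P'" if "1 \<le> n" for n
    using E_filt[OF that] sets_joint_filt_subset by (auto simp: sets_PA)
  have "{\<omega>\<in>?\<Omega>. D k \<omega>} \<in> sets (joint_space K M)"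
    using proc k unfolding is_procedure_def by blast
  moreover have "right = (if v then {\<omega>\<in>?\<Omega>. D k \<omega>} else ?\<Omega> - {\<omega>\<in>?\<Omega>. D k \<omega>})" "wrong = ?\<Omega> - right"
    by (auto simp: right_def wrong_def)
  ultimately have right_sets: "right \<in> sets ?P'" and wrong_sets: "wrong \<in> sets ?P"
    by (auto simp: sets_PA)
  have crossed_sets: "crossed \<in> sets ?P" unfolding crossed_def by (rule sets_joint_llr_crossed)
  have cover: "{\<omega>\<in>?\<Omega>. T k \<omega> \<le> enat N} \<subseteq> wrong \<union> (\<Union>n\<in>{1..N}. E n) \<union> crossed"
  proof
    fix \<omega> assume \<omega>: "\<omega> \<in> {\<omega>\<in>?\<Omega>. T k \<omega> \<le> enat N}"
    then obtain m where m: "T k \<omega> = enat m" "m \<le> N" by (cases "T k \<omega>") auto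
    have "1 \<le> T k \<omega>" using proc k \<omega> unfolding is_procedure_def by blast
    then have "1 \<le> m" using m by (simp add: one_enat_def)
    then show "\<omega> \<in> wrong \<union> (\<Union>n\<in>{1..N}. E n) \<union> crossed"
      using \<omega> m unfolding wrong_def E_def crossed_def
      by (cases "D k \<omega> = v"; cases "joint_llr A A' m \<omega> < L") (auto simp: not_less)
  qed
  have "emeasure ?P {\<omega>\<in>?\<Omega>. T k \<omega> \<le> enat N} \<le> emeasure ?P (wrong \<union> (\<Union>n\<in>{1..N}. E n) \<union> crossed)"
    using cover wrong_sets E_sets crossed_sets by (intro emeasure_mono) auto
  also have "\<dots> \<le> emeasure ?P wrong + emeasure ?P (\<Union>n\<in>{1..N}. E n) + emeasure ?P crossed"
    using wrong_sets E_sets crossed_sets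
    by (intro order.trans[OF emeasure_subadditive] add_right_mono emeasure_subadditive) auto
  also have "emeasure ?P (\<Union>n\<in>{1..N}. E n) \<le> (\<Sum>n\<in>{1..N}. emeasure ?P (E n))"
    using E_sets by (intro emeasure_subadditive_finite) auto
  also have "\<dots> \<le> (\<Sum>n\<in>{1..N}. ennreal (exp L) * emeasure ?P' (E n))"
    using E_filt by (intro sum_mono emeasure_PA_le_exp_emeasure) (auto simp: E_def)
  also have "\<dots> = ennreal (exp L) * emeasure ?P' (\<Union>n\<in>{1..N}. E n)"
    using E_sets by (subst sum_emeasure[symmetric])
      (auto simp: sum_distrib_left disjoint_family_on_def E_def)
  also have "\<dots> \<le> ennreal (exp L) * emeasure ?P' right"
    using right_sets by (intro mult_left_mono emeasure_mono) (auto simp: E_def right_def)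
  finally show ?thesis unfolding wrong_def right_def crossed_def by (simp add: add_mono)
qed

lemma ExpT_ge_change_of_measure:
  assumes proc: "is_procedure K M P0 P1 T D" and k: "k \<in> {1..K}"
  shows "ennreal (real N * (1 - measure (PA K P0 P1 A) {\<omega>\<in>space (joint_space K M). D k \<omega> \<noteq> v}
        - exp L * measure (PA K P0 P1 A') {\<omega>\<in>space (joint_space K M). D k \<omega> = v}
        - measure (PA K P0 P1 A) {\<omega>\<in>space (joint_space K M). \<exists>n\<in>{1..N}. L \<le> joint_llr A A' n \<omega>}))
      \<le> ExpT K P0 P1 A (T k)"
proof -
  let ?\<Omega> = "space (joint_space K M)" and ?P = "PA K P0 P1 A" and ?P' = "PA K P0 P1 A'"
  interpret P: prob_space ?P by (rule prob_space_PA)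
  interpret P': prob_space ?P' by (rule prob_space_PA)
  define m1 where "m1 = measure ?P {\<omega>\<in>?\<Omega>. D k \<omega> \<noteq> v}"
  define m2 where "m2 = measure ?P' {\<omega>\<in>?\<Omega>. D k \<omega> = v}"
  define m3 where "m3 = measure ?P {\<omega>\<in>?\<Omega>. \<exists>n\<in>{1..N}. L \<le> joint_llr A A' n \<omega>}"
  have stopped_sets: "{\<omega>\<in>space ?P. T k \<omega> \<le> enat N} \<in> sets ?P"
    using proc k sets_joint_filt_subset[of K M N] unfolding is_procedure_def by (auto simp: sets_PA space_PA)
  have "ennreal (measure ?P {\<omega>\<in>space ?P. T k \<omega> \<le> enat N})
          \<le> ennreal m1 + ennreal (exp L) * ennreal m2 + ennreal m3"
    using emeasure_stopped_le[OF proc k, of A N v L A']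
    by (simp add: P.emeasure_eq_measure P'.emeasure_eq_measure space_PA m1_def m2_def m3_def)
  also have "\<dots> = ennreal (m1 + exp L * m2 + m3)"
    by (simp add: ennreal_mult ennreal_plus m1_def m2_def m3_def)
  finally have "measure ?P {\<omega>\<in>space ?P. T k \<omega> \<le> enat N} \<le> m1 + exp L * m2 + m3"
    by (subst (asm) ennreal_le_iff) (auto simp: m1_def m2_def m3_def)
  then have "ennreal (real N * (1 - m1 - exp L * m2 - m3))
               \<le> ennreal (real N * (1 - measure ?P {\<omega>\<in>space ?P. T k \<omega> \<le> enat N}))"
    by (intro ennreal_leI mult_left_mono) auto
  also have "\<dots> \<le> ExpT K P0 P1 A (T k)"
    unfolding ExpT_def by (rule nn_integral_enat_ge_mult_prob_gt[OF prob_space_PA stopped_sets])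
  finally show ?thesis unfolding m1_def m2_def m3_def .
qed

end


section \<open>Growth of the log-likelihood ratios\<close>

lemma measure_tendsto_0_of_AE_eventually_not_in:
  assumes "prob_space \<mu>" and E: "\<And>N. E N \<in> sets \<mu>"
    and ae: "AE \<omega> in \<mu>. eventually (\<lambda>N. \<omega> \<notin> E N) sequentially"
  shows "(\<lambda>N. measure \<mu> (E N)) \<longlonglongrightarrow> 0"
proof -
  interpret prob_space \<mu> by fact
  have "(\<lambda>N. integral\<^sup>L \<mu> (indicator (E N) :: _ \<Rightarrow> real)) \<longlonglongrightarrow> integral\<^sup>L \<mu> (\<lambda>_. 0::real)"
  proof (rule integral_dominated_convergence[where w="\<lambda>_. 1"])
    show "AE x in \<mu>. (\<lambda>N. indicator (E N) x :: real) \<longlonglongrightarrow> 0"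
      using ae
    proof eventually_elim
      fix x assume "\<forall>\<^sub>F N in sequentially. x \<notin> E N"
      then have "\<forall>\<^sub>F N in sequentially. indicator (E N) x = (0::real)"
        by (rule eventually_mono) auto
      then show "(\<lambda>N. indicator (E N) x :: real) \<longlonglongrightarrow> 0" by (rule tendsto_eventually)
    qed
    show "AE x in \<mu>. norm (indicator (E N) x :: real) \<le> 1" for N by (auto simp: indicator_def)
  qed (use E in auto)
  then show ?thesis using E by (simp add: Int_absorb2 sets.sets_into_space)
qed

lemma eventually_le_of_limsup_le:
  fixes f :: "nat \<Rightarrow> real"
  assumes "limsup (\<lambda>n. ereal (f n / real n)) \<le> ereal R"
  shows "\<forall>\<delta>>0. eventually (\<lambda>n. f n \<le> (R + \<delta>) * real n) sequentially"
proof (intro allI impI)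
  fix \<delta> :: real assume "\<delta> > 0"
  then have "limsup (\<lambda>n. ereal (f n / real n)) < ereal (R + \<delta>)"
    using assms by (simp add: order.strict_trans1)
  then have "eventually (\<lambda>n. ereal (f n / real n) < ereal (R + \<delta>)) sequentially"
    by (rule Limsup_lessD)
  with eventually_ge_at_top[of 1] show "eventually (\<lambda>n. f n \<le> (R + \<delta>) * real n) sequentially"
    by eventually_elim (simp add: divide_less_eq)
qed

lemma eventually_running_max_below:
  fixes \<Lambda> :: "nat \<Rightarrow> real"
  assumes R: "R > 0" and e: "\<epsilon> > 0"
    and growth: "\<forall>\<delta>>0. eventually (\<lambda>n. \<Lambda> n \<le> (R + \<delta>) * real n) sequentially"
  shows "eventually (\<lambda>N. \<not> (\<exists>n\<in>{1..N}. (1 + \<epsilon>) * R * real N \<le> \<Lambda> n)) sequentially"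
proof -
  define \<delta> where "\<delta> = \<epsilon> * R / 2"
  have \<delta>: "\<delta> > 0" "R + \<delta> < (1 + \<epsilon>) * R" using R e by (auto simp: \<delta>_def algebra_simps)
  obtain n\<^sub>0 where n\<^sub>0: "\<And>n. n \<ge> n\<^sub>0 \<Longrightarrow> \<Lambda> n \<le> (R + \<delta>) * real n"
    using growth \<delta>(1) by (auto simp: eventually_sequentially)
  define B where "B = (\<Sum>n<n\<^sub>0. \<bar>\<Lambda> n\<bar>)"
  have pos: "(1 + \<epsilon>) * R > 0" using R e by simp
  show ?thesis unfolding eventually_sequentially
  proof (intro exI[of _ "nat \<lceil>B / ((1 + \<epsilon>) * R)\<rceil> + 1 + n\<^sub>0"] allI impI notI)
    fix N assume N: "nat \<lceil>B / ((1 + \<epsilon>) * R)\<rceil> + 1 + n\<^sub>0 \<le> N"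
      and "\<exists>n\<in>{1..N}. (1 + \<epsilon>) * R * real N \<le> \<Lambda> n"
    then obtain n where n: "n \<in> {1..N}" "(1 + \<epsilon>) * R * real N \<le> \<Lambda> n" by blast
    have "B / ((1 + \<epsilon>) * R) + 1 \<le> real N" using N by linarith
    then have big: "B < (1 + \<epsilon>) * R * real N" using pos by (simp add: field_simps)
    show False
    proof (cases "n < n\<^sub>0")
      case True
      have "\<Lambda> n \<le> \<bar>\<Lambda> n\<bar>" by simp
      also have "\<bar>\<Lambda> n\<bar> \<le> B" unfolding B_def using True by (intro member_le_sum) auto
      finally show False using n big by simp
    next
      case False
      then have "\<Lambda> n \<le> (R + \<delta>) * real N"
        using n\<^sub>0 n R \<delta> by (meson mult_left_mono atLeastAtMost_iff not_less of_nat_le_iff order.trans add_pos_pos less_imp_le)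
      also have "\<dots> < (1 + \<epsilon>) * R * real N" using \<delta>(2) n by (intro mult_strict_right_mono) auto
      finally show False using n by simp
    qed
  qed
qed

locale llr_growth = llr_model K M P0 P1 llr
  for K M and P0 P1 :: "nat \<Rightarrow> (nat \<Rightarrow> 'x) measure" and llr +
  fixes I J :: "nat \<Rightarrow> real"
  assumes IJpos: "\<And>k. k \<in> {1..K} \<Longrightarrow> 0 < I k \<and> 0 < J k"
    and limsupI: "\<And>k. k \<in> {1..K} \<Longrightarrow>
                 AE x in P1 k. limsup (\<lambda>n. ereal (llr k n x / real n)) \<le> ereal (I k)"
    and limsupJ: "\<And>k. k \<in> {1..K} \<Longrightarrow>
                 AE x in P0 k. limsup (\<lambda>n. ereal (- llr k n x / real n)) \<le> ereal (J k)"
begin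

definition drift_rate :: "nat set \<Rightarrow> nat set \<Rightarrow> nat \<Rightarrow> real" where
  "drift_rate A A' k = (if k \<in> A \<and> k \<notin> A' then I k else if k \<in> A' \<and> k \<notin> A then J k else 0)"

definition drift :: "nat set \<Rightarrow> nat set \<Rightarrow> real" where
  "drift A A' = (\<Sum>k\<in>{1..K}. drift_rate A A' k)"

lemma AE_component_llr_growth:
  assumes k: "k \<in> {1..K}"
  shows "AE \<omega> in PA K P0 P1 A. \<forall>\<delta>>0. eventually
           (\<lambda>n. llr_sign A A' k * llr k n (\<omega> k) \<le> (drift_rate A A' k + \<delta>) * real n) sequentially"
proof -
  consider "k \<in> A" "k \<notin> A'" | "k \<in> A'" "k \<notin> A" | "(k \<in> A) = (k \<in> A')" by blast
  then show ?thesis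
  proof cases
    case 1
    then have law: "stream_law P0 P1 A k = P1 k" "llr_sign A A' k = 1" "drift_rate A A' k = I k"
      by (auto simp: stream_law_def llr_sign_def drift_rate_def)
    have "AE x in P1 k. \<forall>\<delta>>0. eventually (\<lambda>n. llr k n x \<le> (I k + \<delta>) * real n) sequentially"
      using limsupI[OF k] by (rule eventually_mono) (rule eventually_le_of_limsup_le)
    then have "AE x in stream_law P0 P1 A k. \<forall>\<delta>>0. eventually
                       (\<lambda>n. llr_sign A A' k * llr k n x \<le> (drift_rate A A' k + \<delta>) * real n) sequentially"
      unfolding law by simp
    then show ?thesis by (rule AE_PA_component[OF k])
  next
    case 2
    then have law: "stream_law P0 P1 A k = P0 k" "llr_sign A A' k = -1" "drift_rate A A' k = J k"
      by (auto simp: stream_law_def llr_sign_def drift_rate_def)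
    have "AE x in P0 k. \<forall>\<delta>>0. eventually (\<lambda>n. - llr k n x \<le> (J k + \<delta>) * real n) sequentially"
      using limsupJ[OF k] by (rule eventually_mono) (rule eventually_le_of_limsup_le[where f="\<lambda>n. - llr k n _"])
    then have "AE x in stream_law P0 P1 A k. \<forall>\<delta>>0. eventually
                       (\<lambda>n. llr_sign A A' k * llr k n x \<le> (drift_rate A A' k + \<delta>) * real n) sequentially"
      unfolding law by simp
    then show ?thesis by (rule AE_PA_component[OF k])
  next
    case 3
    then have "llr_sign A A' k = 0" "drift_rate A A' k = 0" by (auto simp: llr_sign_def drift_rate_def)
    then show ?thesis by (auto intro!: always_eventually)
  qed
qed

lemma AE_joint_llr_growth:
  "AE \<omega> in PA K P0 P1 A. \<forall>\<delta>>0. eventually (\<lambda>n. joint_llr A A' n \<omega> \<le> (drift A A' + \<delta>) * real n) sequentially"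
proof -
  have "AE \<omega> in PA K P0 P1 A. \<forall>k\<in>{1..K}. \<forall>\<delta>>0. eventually
     (\<lambda>n. llr_sign A A' k * llr k n (\<omega> k) \<le> (drift_rate A A' k + \<delta>) * real n) sequentially"
    by (intro AE_finite_allI AE_component_llr_growth) auto
  then show ?thesis
  proof (rule eventually_mono, intro allI impI)
    fix \<omega> and \<delta> :: real
    assume growth: "\<forall>k\<in>{1..K}. \<forall>\<delta>>0. eventually
      (\<lambda>n. llr_sign A A' k * llr k n (\<omega> k) \<le> (drift_rate A A' k + \<delta>) * real n) sequentially"
      and "\<delta> > 0"
    define \<delta>' where "\<delta>' = \<delta> / (real K + 1)"
    have \<delta>': "\<delta>' > 0" "real K * \<delta>' \<le> \<delta>" using \<open>\<delta> > 0\<close> by (auto simp: \<delta>'_def field_simps)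
    have "eventually (\<lambda>n. \<forall>k\<in>{1..K}. llr_sign A A' k * llr k n (\<omega> k) \<le> (drift_rate A A' k + \<delta>') * real n)
            sequentially"
      using growth \<delta>' by (intro eventually_ball_finite) auto
    then show "eventually (\<lambda>n. joint_llr A A' n \<omega> \<le> (drift A A' + \<delta>) * real n) sequentially"
    proof (rule eventually_mono)
      fix n assume "\<forall>k\<in>{1..K}. llr_sign A A' k * llr k n (\<omega> k) \<le> (drift_rate A A' k + \<delta>') * real n"
      then have "joint_llr A A' n \<omega> \<le> (\<Sum>k\<in>{1..K}. (drift_rate A A' k + \<delta>') * real n)"
        unfolding joint_llr_def by (intro sum_mono) auto
      also have "\<dots> = drift A A' * real n + real K * \<delta>' * real n"
        by (simp add: drift_def sum.distrib sum_distrib_right[symmetric] distrib_right)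
      also have "\<dots> \<le> drift A A' * real n + \<delta> * real n"
        using \<delta>' by (intro add_left_mono mult_right_mono) auto
      finally show "joint_llr A A' n \<omega> \<le> (drift A A' + \<delta>) * real n" by (simp add: algebra_simps)
    qed
  qed
qed

definition overshoot :: "nat set \<Rightarrow> nat set \<Rightarrow> real \<Rightarrow> nat \<Rightarrow> real" where
  "overshoot A A' \<epsilon> N = measure (PA K P0 P1 A) {\<omega>\<in>space (joint_space K M).
     \<exists>n\<in>{1..N}. (1 + \<epsilon>) * drift A A' * real N \<le> joint_llr A A' n \<omega>}"

lemma overshoot_tendsto_0:
  assumes R: "drift A A' > 0" and e: "\<epsilon> > 0"
  shows "overshoot A A' \<epsilon> \<longlonglongrightarrow> 0"
  unfolding overshoot_def
proof (rule measure_tendsto_0_of_AE_eventually_not_in[OF prob_space_PA])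
  show "{\<omega>\<in>space (joint_space K M). \<exists>n\<in>{1..N}. (1 + \<epsilon>) * drift A A' * real N \<le> joint_llr A A' n \<omega>}
          \<in> sets (PA K P0 P1 A)" for N
    by (rule sets_joint_llr_crossed)
  show "AE \<omega> in PA K P0 P1 A. eventually (\<lambda>N. \<omega> \<notin> {\<omega>\<in>space (joint_space K M).
          \<exists>n\<in>{1..N}. (1 + \<epsilon>) * drift A A' * real N \<le> joint_llr A A' n \<omega>}) sequentially"
    using AE_joint_llr_growth[of A A']
    by (rule eventually_mono) (use eventually_running_max_below[OF R e] in \<open>auto elim!: eventually_mono\<close>)
qed

end

section \<open>Asymptotic bounds\<close>

lemma asymp_equivI_rel_error:
  fixes f g :: "'a \<Rightarrow> real"
  assumes "\<And>c. c > 0 \<Longrightarrow> eventually (\<lambda>z. \<bar>f z - g z\<bar> \<le> c * \<bar>g z\<bar>) F"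
  shows "f \<sim>[F] g"
  unfolding asymp_equiv_altdef by (rule landau_o.smallI) (use assms in auto)

lemma eventually_ge_abs_ln:
  fixes x :: "'a \<Rightarrow> real"
  assumes x0: "(x \<longlongrightarrow> 0) F" and xpos: "eventually (\<lambda>z. 0 < x z) F"
  shows "eventually (\<lambda>z. B \<le> \<bar>ln (x z)\<bar>) F"
proof -
  have "eventually (\<lambda>z. x z < exp (- \<bar>B\<bar>)) F" by (rule order_tendstoD(2)[OF x0]) simp
  with xpos show ?thesis
  proof eventually_elim
    case (elim z)
    then have "ln (x z) < - \<bar>B\<bar>" by (metis ln_exp ln_less_cancel_iff exp_gt_zero)
    then show ?case by linarith
  qed
qed

lemma filterlim_nat_floor_abs_ln:
  fixes x :: "'a \<Rightarrow> real"
  assumes x0: "(x \<longlongrightarrow> 0) F" and xpos: "eventually (\<lambda>z. 0 < x z) F" and c: "c > 0"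
  shows "filterlim (\<lambda>z. nat \<lfloor>c * \<bar>ln (x z)\<bar>\<rfloor>) at_top F"
  unfolding filterlim_at_top
proof
  fix m :: nat
  have "eventually (\<lambda>z. (real m + 1) / c \<le> \<bar>ln (x z)\<bar>) F" by (rule eventually_ge_abs_ln[OF x0 xpos])
  then show "eventually (\<lambda>z. m \<le> nat \<lfloor>c * \<bar>ln (x z)\<bar>\<rfloor>) F"
  proof (rule eventually_mono)
    fix z assume "(real m + 1) / c \<le> \<bar>ln (x z)\<bar>"
    then have "real m + 1 \<le> c * \<bar>ln (x z)\<bar>" using c by (simp add: field_simps)
    then show "m \<le> nat \<lfloor>c * \<bar>ln (x z)\<bar>\<rfloor>" by linarith
  qed
qed

text \<open>
  The time up to which a procedure with error probability \<open>x\<close> cannot have stopped when the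
  relevant log-likelihood ratio drifts at rate \<open>R\<close>, with slack \<open>\<epsilon>\<close> on both sides.
\<close>
definition horizon :: "real \<Rightarrow> real \<Rightarrow> real \<Rightarrow> nat" where
  "horizon R \<epsilon> x = nat \<lfloor>(1 - \<epsilon>) / ((1 + \<epsilon>) * R) * \<bar>ln x\<bar>\<rfloor>"

lemma exp_horizon_mult_le_powr:
  assumes x: "0 < x" "x < 1" and e: "0 < \<epsilon>" "\<epsilon> < 1" and R: "R > 0"
  shows "exp ((1 + \<epsilon>) * R * real (horizon R \<epsilon> x)) * x \<le> x powr \<epsilon>"
proof -
  have "real (horizon R \<epsilon> x) \<le> (1 - \<epsilon>) / ((1 + \<epsilon>) * R) * \<bar>ln x\<bar>"
    unfolding horizon_def using e R by (simp add: of_nat_nat)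
  then have "(1 + \<epsilon>) * R * real (horizon R \<epsilon> x) \<le> (1 + \<epsilon>) * R * ((1 - \<epsilon>) / ((1 + \<epsilon>) * R) * \<bar>ln x\<bar>)"
    using e R by (intro mult_left_mono) auto
  also have "\<dots> = (1 - \<epsilon>) * \<bar>ln x\<bar>"
  proof -
    have cancel: "c \<noteq> 0 \<Longrightarrow> c * (a / c * y) = a * y" for a c y :: real by (simp add: field_simps)
    show ?thesis by (rule cancel) (use e R in simp)
  qed
  finally have "exp ((1 + \<epsilon>) * R * real (horizon R \<epsilon> x)) * x \<le> exp ((1 - \<epsilon>) * \<bar>ln x\<bar>) * x"
    using x by (intro mult_right_mono) auto
  also have "\<dots> = exp ((1 - \<epsilon>) * \<bar>ln x\<bar> + ln x)" by (simp only: exp_add exp_ln[OF x(1)])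
  also have "(1 - \<epsilon>) * \<bar>ln x\<bar> + ln x = \<epsilon> * ln x" using x by (simp add: algebra_simps)
  also have "exp (\<epsilon> * ln x) = x powr \<epsilon>" using x by (simp add: powr_def mult.commute)
  finally show ?thesis .
qed

lemma real_horizon_ge:
  assumes R: "R > 0" and e: "0 < e" "e < 1"
  shows "(1 - e / 2) * (\<bar>ln x\<bar> / R) - 1 \<le> real (horizon R (e / 4) x)"
proof -
  let ?g = "\<bar>ln x\<bar> / R"
  have "(1 - e / 4) / ((1 + e / 4) * R) * \<bar>ln x\<bar> = (1 - e / 4) / (1 + e / 4) * ?g"
    using R e by (simp add: field_simps)
  moreover have "1 - e / 2 \<le> (1 - e / 4) / (1 + e / 4)" using e by (simp add: field_simps)
  moreover have "0 \<le> ?g" using R by simp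
  ultimately have "(1 - e / 2) * ?g \<le> (1 - e / 4) / ((1 + e / 4) * R) * \<bar>ln x\<bar>"
    by (metis mult_right_mono)
  then show ?thesis unfolding horizon_def by linarith
qed

lemma horizon_product_ge:
  fixes g N f :: real
  assumes e: "0 < e" "e < 1" and g: "8 / e \<le> g"
    and N: "(1 - e / 2) * g - 1 \<le> N" and f: "1 - 3 * e / 8 \<le> f"
  shows "(1 - e) * g \<le> N * f"
proof -
  have "8 \<le> 8 / e" using e by (simp add: field_simps)
  then have "8 \<le> g" using g by linarith
  then have "4 \<le> (1 - e / 2) * g" using mult_mono[of "1/2" "1 - e/2" 8 g] e by simp
  then have N0: "0 \<le> N" and g0: "0 \<le> g" using N \<open>8 \<le> g\<close> by linarith+
  have "(1 - e) * g \<le> (1 - 7 * e / 8) * g - 1"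
    using g e by (simp add: field_simps)
  also have "\<dots> \<le> (1 - e / 2) * (1 - 3 * e / 8) * g - (1 - 3 * e / 8)"
  proof -
    have "1 - 7 * e / 8 \<le> (1 - e / 2) * (1 - 3 * e / 8)" using e by (simp add: algebra_simps)
    then have "(1 - 7 * e / 8) * g \<le> (1 - e / 2) * (1 - 3 * e / 8) * g" using g0 by (rule mult_right_mono)
    then show ?thesis using e by simp
  qed
  also have "\<dots> = ((1 - e / 2) * g - 1) * (1 - 3 * e / 8)" by (simp add: field_simps)
  also have "\<dots> \<le> N * (1 - 3 * e / 8)" using N e by (intro mult_right_mono) auto
  also have "\<dots> \<le> N * f"
    using f N0 by (rule mult_left_mono)
  finally show ?thesis .
qed

lemma eventually_upper_of_threshold_bound:
  fixes x thr E :: "'a \<Rightarrow> real"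
  assumes R: "R > 0" and e: "0 < e" "e < 1"
    and x0: "(x \<longlongrightarrow> 0) F" and xpos: "eventually (\<lambda>z. 0 < x z) F"
    and thr: "thr \<sim>[F] (\<lambda>z. \<bar>ln (x z)\<bar>)"
    and upper: "\<And>\<epsilon>. 0 < \<epsilon> \<Longrightarrow> \<epsilon> < R \<Longrightarrow> \<exists>C. eventually (\<lambda>z. E z \<le> thr z / (R - \<epsilon>) + C) F"
  shows "eventually (\<lambda>z. E z \<le> (1 + e) * (\<bar>ln (x z)\<bar> / R)) F"
proof -
  define \<epsilon> where "\<epsilon> = e * R / (4 + e)"
  have \<epsilon>: "0 < \<epsilon>" "\<epsilon> < R" using R e by (auto simp: \<epsilon>_def field_simps)
  have R_\<epsilon>: "R - \<epsilon> = 4 * R / (4 + e)" using e by (simp add: \<epsilon>_def field_simps)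
  obtain C where C: "eventually (\<lambda>z. E z \<le> thr z / (R - \<epsilon>) + C) F" using upper[OF \<epsilon>] by blast
  have "eventually (\<lambda>z. norm (thr z) \<le> (1 + e/4) * norm \<bar>ln (x z)\<bar>) F"
    by (rule asymp_equiv_imp_eventually_le[OF thr]) (use e in simp)
  moreover have "eventually (\<lambda>z. 4 * C * R / e \<le> \<bar>ln (x z)\<bar>) F"
    by (rule eventually_ge_abs_ln[OF x0 xpos])
  ultimately show ?thesis using C
  proof eventually_elim
    case (elim z)
    define g where "g = \<bar>ln (x z)\<bar> / R"
    have g0: "g \<ge> 0" using R by (simp add: g_def)
    have "thr z \<le> (1 + e/4) * \<bar>ln (x z)\<bar>" using elim(1) by simp
    then have "thr z / (R - \<epsilon>) \<le> (1 + e/4) * \<bar>ln (x z)\<bar> / (R - \<epsilon>)"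
      using \<epsilon> by (intro divide_right_mono) auto
    also have "\<dots> = (1 + e/4) * (1 + e/4) * g"
      unfolding R_\<epsilon> g_def using R e by (simp add: field_simps)
    also have "\<dots> \<le> (1 + 3 * e / 4) * g"
      using e g0 by (intro mult_right_mono) (auto simp: algebra_simps power2_eq_square)
    finally have "thr z / (R - \<epsilon>) \<le> (1 + 3 * e / 4) * g" .
    moreover have "C \<le> e / 4 * g" using elim(2) R e by (simp add: g_def field_simps)
    ultimately have "E z \<le> (1 + 3 * e / 4) * g + e / 4 * g" using elim(3) by linarith
    then show ?case by (simp add: g_def algebra_simps add_divide_distrib)
  qed
qed

lemma eventually_lower_of_horizon_bound:
  fixes x y Lo :: "'a \<Rightarrow> real"
  assumes R: "R > 0" and e: "0 < e" "e < 1"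
    and x0: "(x \<longlongrightarrow> 0) F" and xpos: "eventually (\<lambda>z. 0 < x z) F" and y0: "(y \<longlongrightarrow> 0) F"
    and lower: "\<And>\<epsilon>. 0 < \<epsilon> \<Longrightarrow> \<epsilon> < 1 \<Longrightarrow> \<exists>p. p \<longlonglongrightarrow> 0 \<and> eventually (\<lambda>z.
        real (horizon R \<epsilon> (x z)) * (1 - y z - x z powr \<epsilon> - p (horizon R \<epsilon> (x z))) \<le> Lo z) F"
  shows "eventually (\<lambda>z. (1 - e) * (\<bar>ln (x z)\<bar> / R) \<le> Lo z) F"
proof -
  define \<epsilon> where "\<epsilon> = e / 4"
  have \<epsilon>: "0 < \<epsilon>" "\<epsilon> < 1" using e by (auto simp: \<epsilon>_def)
  obtain p where p: "p \<longlonglongrightarrow> 0" and bound: "eventually (\<lambda>z.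
        real (horizon R \<epsilon> (x z)) * (1 - y z - x z powr \<epsilon> - p (horizon R \<epsilon> (x z))) \<le> Lo z) F"
    using lower[OF \<epsilon>] by blast
  have "filterlim (\<lambda>z. horizon R \<epsilon> (x z)) at_top F"
    unfolding horizon_def using \<epsilon> R by (intro filterlim_nat_floor_abs_ln[OF x0 xpos]) auto
  then have "((\<lambda>z. p (horizon R \<epsilon> (x z))) \<longlongrightarrow> 0) F" by (rule filterlim_compose[OF p])
  then have "eventually (\<lambda>z. p (horizon R \<epsilon> (x z)) < e / 8) F" by (rule order_tendstoD(2)) (use e in simp)
  moreover have "eventually (\<lambda>z. y z < e / 8) F" by (rule order_tendstoD(2)[OF y0]) (use e in simp)
  moreover have "eventually (\<lambda>z. x z < (e / 8) powr (1 / \<epsilon>)) F"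
    by (rule order_tendstoD(2)[OF x0]) (use e in simp)
  moreover have "eventually (\<lambda>z. 8 * R / e \<le> \<bar>ln (x z)\<bar>) F" by (rule eventually_ge_abs_ln[OF x0 xpos])
  ultimately show ?thesis using bound xpos
  proof eventually_elim
    case (elim z)
    have "x z powr \<epsilon> < ((e / 8) powr (1 / \<epsilon>)) powr \<epsilon>"
      using elim(3,6) \<epsilon> by (intro powr_less_mono2) auto
    also have "\<dots> = e / 8" using \<epsilon> e by (simp add: powr_powr)
    finally have "1 - 3 * e / 8 \<le> 1 - y z - x z powr \<epsilon> - p (horizon R \<epsilon> (x z))"
      using elim(1,2) by linarith
    moreover have "8 / e \<le> \<bar>ln (x z)\<bar> / R" using elim(4) R e by (simp add: field_simps)
    ultimately have "(1 - e) * (\<bar>ln (x z)\<bar> / R)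
                       \<le> real (horizon R \<epsilon> (x z)) * (1 - y z - x z powr \<epsilon> - p (horizon R \<epsilon> (x z)))"
      using real_horizon_ge[OF R e, of "x z"] unfolding \<epsilon>_def by (intro horizon_product_ge[OF e]) auto
    then show ?case using elim(5) by linarith
  qed
qed

lemma asymp_equiv_of_bounds:
  fixes x y thr E Lo :: "'a \<Rightarrow> real"
  assumes R: "R > 0"
    and x0: "(x \<longlongrightarrow> 0) F" and xpos: "eventually (\<lambda>z. 0 < x z) F" and y0: "(y \<longlongrightarrow> 0) F"
    and thr: "thr \<sim>[F] (\<lambda>z. \<bar>ln (x z)\<bar>)"
    and upper: "\<And>\<epsilon>. 0 < \<epsilon> \<Longrightarrow> \<epsilon> < R \<Longrightarrow> \<exists>C. eventually (\<lambda>z. E z \<le> thr z / (R - \<epsilon>) + C) F"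
    and lower: "\<And>\<epsilon>. 0 < \<epsilon> \<Longrightarrow> \<epsilon> < 1 \<Longrightarrow> \<exists>p. p \<longlonglongrightarrow> 0 \<and> eventually (\<lambda>z.
        real (horizon R \<epsilon> (x z)) * (1 - y z - x z powr \<epsilon> - p (horizon R \<epsilon> (x z))) \<le> Lo z) F"
    and Lo_le_E: "eventually (\<lambda>z. Lo z \<le> E z) F"
  shows "E \<sim>[F] (\<lambda>z. \<bar>ln (x z)\<bar> / R)" and "Lo \<sim>[F] (\<lambda>z. \<bar>ln (x z)\<bar> / R)"
proof -
  have both: "eventually (\<lambda>z. \<bar>E z - \<bar>ln (x z)\<bar> / R\<bar> \<le> c * \<bar>\<bar>ln (x z)\<bar> / R\<bar> \<and>
      \<bar>Lo z - \<bar>ln (x z)\<bar> / R\<bar> \<le> c * \<bar>\<bar>ln (x z)\<bar> / R\<bar>) F" if c: "c > 0" for c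
  proof -
    define e where "e = min c (1/2)"
    have e: "0 < e" "e < 1" "e \<le> c" using c by (auto simp: e_def)
    have "eventually (\<lambda>z. E z \<le> (1 + e) * (\<bar>ln (x z)\<bar> / R)) F"
      by (rule eventually_upper_of_threshold_bound[OF R e(1,2) x0 xpos thr upper])
    moreover have "eventually (\<lambda>z. (1 - e) * (\<bar>ln (x z)\<bar> / R) \<le> Lo z) F"
      by (rule eventually_lower_of_horizon_bound[OF R e(1,2) x0 xpos y0 lower])
    ultimately show ?thesis using Lo_le_E
    proof eventually_elim
      case (elim z)
      define g where "g = \<bar>ln (x z)\<bar> / R"
      have g0: "0 \<le> g" using R by (simp add: g_def)
      then have "e * g \<le> c * g" using e by (intro mult_right_mono) auto
      then show ?case using elim g0 unfolding g_def[symmetric] by (auto simp: algebra_simps abs_le_iff)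
    qed
  qed
  show "E \<sim>[F] (\<lambda>z. \<bar>ln (x z)\<bar> / R)"
    by (rule asymp_equivI_rel_error, rule eventually_mono[OF both]) auto
  show "Lo \<sim>[F] (\<lambda>z. \<bar>ln (x z)\<bar> / R)"
    by (rule asymp_equivI_rel_error, rule eventually_mono[OF both]) auto
qed

section \<open>Upper bounds for the proposed procedure\<close>

lemma not_before_first_time:
  assumes "enat t < first_time P" "1 \<le> t"
  shows "\<not> P t"
proof
  assume P: "P t"
  then have "first_time P = enat (LEAST n. 1 \<le> n \<and> P n)" using assms(2) by (auto simp: first_time_def)
  also have "(LEAST n. 1 \<le> n \<and> P n) \<le> t" using P assms(2) by (intro Least_le) auto
  finally show False using assms(1) by simp
qed

lemma not_accept_before_hatT:
  assumes "enat t < hatT K l u llr a b c d k \<omega>" "1 \<le> t"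
  shows "\<not> (if l = u then llr k t (\<omega> k) \<ge> kth_largest K (\<lambda>j. llr j t (\<omega> j)) (l + 1) + c
            else llr k t (\<omega> k) \<ge> min a (kth_largest K (\<lambda>j. llr j t (\<omega> j)) (l + 1) + c))"
proof -
  have "enat t < hatT1 K l u llr a c k \<omega>" using assms(1) by (simp add: hatT_def)
  then show ?thesis using not_before_first_time[OF _ assms(2)] unfolding hatT1_def by blast
qed

lemma not_reject_before_hatT:
  assumes "enat t < hatT K l u llr a b c d k \<omega>" "1 \<le> t"
  shows "\<not> (if l = u then llr k t (\<omega> k) \<le> kth_largest K (\<lambda>j. llr j t (\<omega> j)) u - d
            else llr k t (\<omega> k) \<le> max (- b) (kth_largest K (\<lambda>j. llr j t (\<omega> j)) u - d))"
proof -
  have "enat t < hatT2 K l u llr b d k \<omega>" using assms(1) by (simp add: hatT_def)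
  then show ?thesis using not_before_first_time[OF _ assms(2)] unfolding hatT2_def by blast
qed

locale sequential_test = llr_growth K M P0 P1 llr I J
  for K M and P0 P1 :: "nat \<Rightarrow> (nat \<Rightarrow> 'x) measure" and llr I J +
  fixes l u :: nat
  assumes lu: "l \<le> u" "u \<le> K" "0 < u" "l < K"
    and compI: "\<And>k \<epsilon>. k \<in> {1..K} \<Longrightarrow> 0 < \<epsilon> \<Longrightarrow>
                 summable (\<lambda>n. measure (P1 k)
                   {x \<in> space (P1 k). llr k (Suc n) x / real (Suc n) \<le> I k - \<epsilon>})"
    and compJ: "\<And>k \<epsilon>. k \<in> {1..K} \<Longrightarrow> 0 < \<epsilon> \<Longrightarrow>
                 summable (\<lambda>n. measure (P0 k)
                   {x \<in> space (P0 k). - llr k (Suc n) x / real (Suc n) \<le> J k - \<epsilon>})"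
begin

definition bad_event :: "nat set \<Rightarrow> real \<Rightarrow> nat \<Rightarrow> nat \<Rightarrow> (nat \<Rightarrow> nat \<Rightarrow> 'x) set" where
  "bad_event A \<delta> k t = (if t = 0 then {} else if k \<in> A
     then {\<omega>\<in>space (joint_space K M). llr k t (\<omega> k) / real t \<le> I k - \<delta>}
     else {\<omega>\<in>space (joint_space K M). - llr k t (\<omega> k) / real t \<le> J k - \<delta>})"

definition bad_mass :: "nat set \<Rightarrow> real \<Rightarrow> real" where
  "bad_mass A \<delta> = (\<Sum>k\<in>{1..K}. \<Sum>t. measure (PA K P0 P1 A) (bad_event A \<delta> k t))"

lemma sets_bad_event:
  assumes k: "k \<in> {1..K}"
  shows "bad_event A \<delta> k t \<in> sets (PA K P0 P1 A)"
proof (cases "t = 0")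
  case False
  then have "(\<lambda>\<omega>. llr k t (\<omega> k)) \<in> borel_measurable (PA K P0 P1 A)"
    by (intro measurable_from_subalg[OF subalgebra_PA_joint_filt component_llr_measurable_filt[OF k]]) simp
  then show ?thesis using False unfolding bad_event_def by (auto simp: space_PA[of A, symmetric])
qed (simp add: bad_event_def)

lemma measure_bad_event:
  assumes k: "k \<in> {1..K}" and t: "1 \<le> t"
  shows "measure (PA K P0 P1 A) (bad_event A \<delta> k t) = (if k \<in> A
     then measure (P1 k) {x \<in> space (P1 k). llr k t x / real t \<le> I k - \<delta>}
     else measure (P0 k) {x \<in> space (P0 k). - llr k t x / real t \<le> J k - \<delta>})"
proof -
  have [measurable]: "llr k t \<in> borel_measurable (strm_path_space M k)" by (rule llr_measurable[OF k t])
  define S where "S = (if k \<in> A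
    then {x \<in> space (strm_path_space M k). llr k t x / real t \<le> I k - \<delta>}
    else {x \<in> space (strm_path_space M k). - llr k t x / real t \<le> J k - \<delta>})"
  have "{x \<in> space (strm_path_space M k). llr k t x / real t \<le> I k - \<delta>} \<in> sets (strm_path_space M k)"
    by measurable
  moreover have "{x \<in> space (strm_path_space M k). - llr k t x / real t \<le> J k - \<delta>} \<in> sets (strm_path_space M k)"
    by measurable
  ultimately have S: "S \<in> sets (strm_path_space M k)" by (simp add: S_def)
  have "bad_event A \<delta> k t = {\<omega>\<in>space (PA K P0 P1 A). \<omega> k \<in> S}"
    using k t by (auto simp: bad_event_def S_def space_PA space_joint_space)
  then have "measure (PA K P0 P1 A) (bad_event A \<delta> k t) = measure (stream_law P0 P1 A k) S"
    using measure_PA_component[OF k S] by simp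
  then show ?thesis by (simp add: S_def stream_law_def space_P0[OF k] space_P1[OF k])
qed

lemma summable_bad_event:
  assumes k: "k \<in> {1..K}" and \<delta>: "\<delta> > 0"
  shows "summable (\<lambda>t. measure (PA K P0 P1 A) (bad_event A \<delta> k t))"
proof -
  have "summable (\<lambda>n. measure (PA K P0 P1 A) (bad_event A \<delta> k (Suc n)))"
    using measure_bad_event[OF k] compI[OF k \<delta>] compJ[OF k \<delta>] by (cases "k \<in> A") auto
  then show ?thesis by (subst summable_Suc_iff[symmetric])
qed

lemma bad_mass_nonneg: "\<delta> > 0 \<Longrightarrow> 0 \<le> bad_mass A \<delta>"
  unfolding bad_mass_def by (intro sum_nonneg suminf_nonneg summable_bad_event) auto

lemma llr_gt_if_not_bad_event:
  assumes "\<omega> \<in> space (joint_space K M)" "\<omega> \<notin> bad_event A \<delta> k t" "1 \<le> t"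
  shows "k \<in> A \<Longrightarrow> (I k - \<delta>) * real t < llr k t (\<omega> k)"
    and "k \<notin> A \<Longrightarrow> (J k - \<delta>) * real t < - llr k t (\<omega> k)"
proof -
  have t: "0 < real t" using assms(3) by simp
  show "k \<in> A \<Longrightarrow> (I k - \<delta>) * real t < llr k t (\<omega> k)"
    using assms t by (auto simp: bad_event_def not_le pos_less_divide_eq)
  show "k \<notin> A \<Longrightarrow> (J k - \<delta>) * real t < - llr k t (\<omega> k)"
  proof -
    assume "k \<notin> A"
    then have "J k - \<delta> < (- llr k t (\<omega> k)) / real t" using assms by (auto simp: bad_event_def not_le)
    then have "(J k - \<delta>) * real t < ((- llr k t (\<omega> k)) / real t) * real t"
      using t by (intro mult_strict_right_mono) auto
    also have "\<dots> = - llr k t (\<omega> k)" using t by simp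
    finally show ?thesis .
  qed
qed

definition rate_signal :: "nat set \<Rightarrow> nat \<Rightarrow> real" where
  "rate_signal A i = I i + (if card A = l then calJ K J A else 0)"

definition rate_noise :: "nat set \<Rightarrow> nat \<Rightarrow> real" where
  "rate_noise A j = J j + (if card A = u then calI I A else 0)"

lemma calJ_le: "j \<in> {1..K} - A \<Longrightarrow> calJ K J A \<le> J j"
  unfolding calJ_def by (rule Min_le) auto

lemma calI_le: "A \<subseteq> {1..K} \<Longrightarrow> i \<in> A \<Longrightarrow> calI I A \<le> I i"
  unfolding calI_def by (rule Min_le) (auto intro: finite_subset)

lemma ExpT_le_of_bad_event_cover:
  assumes proc: "is_procedure K M P0 P1 T D" and k: "k \<in> {1..K}" and \<delta>: "\<delta> > 0"
    and cover: "\<And>t. N\<^sub>0 \<le> t \<Longrightarrow>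
      {\<omega>\<in>space (PA K P0 P1 A). enat t < T k \<omega>} \<subseteq> (\<Union>k'\<in>{1..K}. bad_event A \<delta> k' t)"
  shows "ExpT K P0 P1 A (T k) \<le> ennreal (real N\<^sub>0 + bad_mass A \<delta>)"
proof -
  have "T k \<in> measurable (PA K P0 P1 A) (count_space UNIV)"
  proof (rule measurable_enat_of_le_sets)
    fix n
    have "{\<omega>\<in>space (joint_space K M). T k \<omega> \<le> enat n} \<in> sets (joint_filt K M n)"
      using proc k unfolding is_procedure_def by blast
    then show "{\<omega>\<in>space (PA K P0 P1 A). T k \<omega> \<le> enat n} \<in> sets (PA K P0 P1 A)"
      using sets_joint_filt_subset[of K M n] by (auto simp: space_PA sets_PA)
  qed
  then show ?thesis
    unfolding ExpT_def bad_mass_def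
    by (rule nn_integral_enat_le_of_tail_cover[OF prob_space_PA _ finite_atLeastAtMost
          sets_bad_event summable_bad_event[OF _ \<delta>] cover])
qed

text \<open>
  When \<open>|A| = l\<close>, the \<open>(l+1)\<close>-th largest log-likelihood ratio is that of some noise stream,
  which decreases at rate at least \<open>\<J>\<^sub>A\<close>.
\<close>
lemma hatT_signal_stopped:
  assumes A: "A \<subseteq> {1..K}" "l \<le> card A" "card A \<le> u" and i: "i \<in> A"
    and \<omega>: "\<omega> \<in> space (joint_space K M)" and t: "1 \<le> t" and \<epsilon>: "0 < \<epsilon>"
    and thr: "(if card A = l then c else a) \<le> (rate_signal A i - \<epsilon>) * real t"
    and good: "\<omega> \<notin> (\<Union>k\<in>{1..K}. bad_event A (\<epsilon>/2) k t)"
  shows "\<not> enat t < hatT K l u llr a b c d i \<omega>"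
proof
  assume before: "enat t < hatT K l u llr a b c d i \<omega>"
  let ?x = "\<lambda>j. llr j t (\<omega> j)"
  have i_grows: "(I i - \<epsilon>/2) * real t < ?x i"
    using llr_gt_if_not_bad_event(1)[OF \<omega> _ t i] good i A(1) by blast
  show False
  proof (cases "card A = l")
    case True
    obtain j where j: "j \<in> {1..K} - A" "kth_largest K ?x (l + 1) \<le> ?x j"
      using exists_outside_ge_kth_largest[OF A(1) True lu(4)] by blast
    have j_falls: "(J j - \<epsilon>/2) * real t < - ?x j"
      using llr_gt_if_not_bad_event(2)[OF \<omega> _ t] good j(1) by blast
    have "rate_signal A i \<le> I i + J j" using calJ_le[OF j(1)] True by (simp add: rate_signal_def)
    then have "rate_signal A i * real t \<le> (I i + J j) * real t" by (intro mult_right_mono) auto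
    then have "(rate_signal A i - \<epsilon>) * real t \<le> (I i - \<epsilon>/2) * real t + (J j - \<epsilon>/2) * real t"
      by (simp add: algebra_simps)
    then have "c < ?x i - ?x j" using i_grows j_falls thr True by simp
    then show False using not_accept_before_hatT[OF before t] j(2) by (auto split: if_splits)
  next
    case False
    then have "l \<noteq> u" using A by auto
    then have "?x i < a" using not_accept_before_hatT[OF before t] by auto
    also have "a \<le> (I i - \<epsilon>) * real t" using thr False by (simp add: rate_signal_def)
    also have "\<dots> \<le> (I i - \<epsilon>/2) * real t" using \<epsilon> by (intro mult_right_mono) auto
    finally show False using i_grows by simp
  qed
qed

lemma hatT_noise_stopped:
  assumes A: "A \<subseteq> {1..K}" "l \<le> card A" "card A \<le> u" and j: "j \<in> {1..K} - A"
    and \<omega>: "\<omega> \<in> space (joint_space K M)" and t: "1 \<le> t" and \<epsilon>: "0 < \<epsilon>"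
    and thr: "(if card A = u then d else b) \<le> (rate_noise A j - \<epsilon>) * real t"
    and good: "\<omega> \<notin> (\<Union>k\<in>{1..K}. bad_event A (\<epsilon>/2) k t)"
  shows "\<not> enat t < hatT K l u llr a b c d j \<omega>"
proof
  assume before: "enat t < hatT K l u llr a b c d j \<omega>"
  let ?x = "\<lambda>j. llr j t (\<omega> j)"
  have j_falls: "(J j - \<epsilon>/2) * real t < - ?x j"
    using llr_gt_if_not_bad_event(2)[OF \<omega> _ t] good j by blast
  show False
  proof (cases "card A = u")
    case True
    obtain i where i: "i \<in> A" "?x i \<le> kth_largest K ?x u"
      using exists_inside_le_kth_largest[OF A(1) True _ lu(2), of ?x] lu(3) by auto
    have i_grows: "(I i - \<epsilon>/2) * real t < ?x i"
      using llr_gt_if_not_bad_event(1)[OF \<omega> _ t i(1)] good i(1) A(1) by blast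
    have "rate_noise A j \<le> J j + I i" using calI_le[OF A(1) i(1)] True by (simp add: rate_noise_def)
    then have "rate_noise A j * real t \<le> (J j + I i) * real t" by (intro mult_right_mono) auto
    then have "(rate_noise A j - \<epsilon>) * real t \<le> (I i - \<epsilon>/2) * real t + (J j - \<epsilon>/2) * real t"
      by (simp add: algebra_simps)
    then have "d < ?x i - ?x j" using i_grows j_falls thr True by simp
    then show False using not_reject_before_hatT[OF before t] i(2) by (auto split: if_splits)
  next
    case False
    then have "l \<noteq> u" using A by auto
    then have "- ?x j < b" using not_reject_before_hatT[OF before t] by auto
    also have "b \<le> (J j - \<epsilon>) * real t" using thr False by (simp add: rate_noise_def)
    also have "\<dots> \<le> (J j - \<epsilon>/2) * real t" using \<epsilon> by (intro mult_right_mono) auto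
    finally show False using j_falls by simp
  qed
qed

lemma real_nat_ceiling_divide_le:
  "0 \<le> thr \<Longrightarrow> 0 < R \<Longrightarrow> real (nat \<lceil>thr / R\<rceil> + 1) \<le> thr / R + 2"
  by (simp add: of_nat_nat) linarith

lemma le_mult_of_nat_ceiling_divide_le:
  assumes "0 < R" "nat \<lceil>thr / R\<rceil> + 1 \<le> t"
  shows "thr \<le> R * real t"
proof -
  have "thr / R \<le> real t" using assms(2) by linarith
  then show ?thesis using assms(1) by (simp add: pos_divide_le_eq mult.commute)
qed

lemma ExpT_hatT_signal_le:
  assumes A: "A \<subseteq> {1..K}" "l \<le> card A" "card A \<le> u" and i: "i \<in> A"
    and \<epsilon>: "0 < \<epsilon>" "\<epsilon> < rate_signal A i" and ac: "0 \<le> a" "0 \<le> c"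
    and proc: "is_procedure K M P0 P1 (hatT K l u llr a b c d) D"
  shows "ExpT K P0 P1 A (hatT K l u llr a b c d i)
           \<le> ennreal ((if card A = l then c else a) / (rate_signal A i - \<epsilon>) + 2 + bad_mass A (\<epsilon> / 2))"
proof -
  let ?thr = "if card A = l then c else a" and ?R = "rate_signal A i - \<epsilon>"
  have thr: "0 \<le> ?thr" "0 < ?R" using ac \<epsilon> by auto
  have "ExpT K P0 P1 A (hatT K l u llr a b c d i) \<le> ennreal (real (nat \<lceil>?thr / ?R\<rceil> + 1) + bad_mass A (\<epsilon> / 2))"
  proof (rule ExpT_le_of_bad_event_cover[OF proc _ half_gt_zero[OF \<epsilon>(1)]])
    fix t assume t: "nat \<lceil>?thr / ?R\<rceil> + 1 \<le> t"
    show "{\<omega>\<in>space (PA K P0 P1 A). enat t < hatT K l u llr a b c d i \<omega>} \<subseteq> (\<Union>k\<in>{1..K}. bad_event A (\<epsilon>/2) k t)"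
    proof
      fix \<omega> assume "\<omega> \<in> {\<omega>\<in>space (PA K P0 P1 A). enat t < hatT K l u llr a b c d i \<omega>}"
      then have \<omega>: "\<omega> \<in> space (joint_space K M)" and before: "enat t < hatT K l u llr a b c d i \<omega>"
        by (auto simp: space_PA)
      have "1 \<le> t" using t by simp
      from hatT_signal_stopped[OF A i \<omega> this \<epsilon>(1) le_mult_of_nat_ceiling_divide_le[OF thr(2) t]] before
      show "\<omega> \<in> (\<Union>k\<in>{1..K}. bad_event A (\<epsilon>/2) k t)" by blast
    qed
  qed (use A i in auto)
  also have "\<dots> \<le> ennreal (?thr / ?R + 2 + bad_mass A (\<epsilon> / 2))"
    using real_nat_ceiling_divide_le[OF thr] by (intro ennreal_leI) simp
  finally show ?thesis .
qed

lemma ExpT_hatT_noise_le: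
  assumes A: "A \<subseteq> {1..K}" "l \<le> card A" "card A \<le> u" and j: "j \<in> {1..K} - A"
    and \<epsilon>: "0 < \<epsilon>" "\<epsilon> < rate_noise A j" and bd: "0 \<le> b" "0 \<le> d"
    and proc: "is_procedure K M P0 P1 (hatT K l u llr a b c d) D"
  shows "ExpT K P0 P1 A (hatT K l u llr a b c d j)
           \<le> ennreal ((if card A = u then d else b) / (rate_noise A j - \<epsilon>) + 2 + bad_mass A (\<epsilon> / 2))"
proof -
  let ?thr = "if card A = u then d else b" and ?R = "rate_noise A j - \<epsilon>"
  have thr: "0 \<le> ?thr" "0 < ?R" using bd \<epsilon> by auto
  have "ExpT K P0 P1 A (hatT K l u llr a b c d j) \<le> ennreal (real (nat \<lceil>?thr / ?R\<rceil> + 1) + bad_mass A (\<epsilon> / 2))"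
  proof (rule ExpT_le_of_bad_event_cover[OF proc _ half_gt_zero[OF \<epsilon>(1)]])
    fix t assume t: "nat \<lceil>?thr / ?R\<rceil> + 1 \<le> t"
    show "{\<omega>\<in>space (PA K P0 P1 A). enat t < hatT K l u llr a b c d j \<omega>} \<subseteq> (\<Union>k\<in>{1..K}. bad_event A (\<epsilon>/2) k t)"
    proof
      fix \<omega> assume "\<omega> \<in> {\<omega>\<in>space (PA K P0 P1 A). enat t < hatT K l u llr a b c d j \<omega>}"
      then have \<omega>: "\<omega> \<in> space (joint_space K M)" and before: "enat t < hatT K l u llr a b c d j \<omega>"
        by (auto simp: space_PA)
      have "1 \<le> t" using t by simp
      from hatT_noise_stopped[OF A j \<omega> this \<epsilon>(1) le_mult_of_nat_ceiling_divide_le[OF thr(2) t]] before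
      show "\<omega> \<in> (\<Union>k\<in>{1..K}. bad_event A (\<epsilon>/2) k t)" by blast
    qed
  qed (use j in auto)
  also have "\<dots> \<le> ennreal (?thr / ?R + 2 + bad_mass A (\<epsilon> / 2))"
    using real_nat_ceiling_divide_le[OF thr] by (intro ennreal_leI) simp
  finally show ?thesis .
qed

end

section \<open>Lower bounds for arbitrary procedures\<close>

context sequential_test
begin

definition weakest_noise :: "nat set \<Rightarrow> nat" where
  "weakest_noise A = (SOME j. j \<in> {1..K} - A \<and> J j = calJ K J A)"

definition weakest_signal :: "nat set \<Rightarrow> nat" where
  "weakest_signal A = (SOME i. i \<in> A \<and> I i = calI I A)"

text \<open>The least favourable alternatives in \<open>\<Pi>\<^sub>l\<^sub>,\<^sub>u\<close> for deciding about a signal \<open>i\<close>,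
  respectively a noise stream \<open>j\<close>.\<close>
definition drop_signal :: "nat set \<Rightarrow> nat \<Rightarrow> nat set" where
  "drop_signal A i = (if card A = l then insert (weakest_noise A) (A - {i}) else A - {i})"

definition add_signal :: "nat set \<Rightarrow> nat \<Rightarrow> nat set" where
  "add_signal A j = (if card A = u then insert j (A - {weakest_signal A}) else insert j A)"

lemma weakest_noise:
  assumes "A \<subseteq> {1..K}" "card A < K"
  shows "weakest_noise A \<in> {1..K} - A \<and> J (weakest_noise A) = calJ K J A"
proof -
  have "{1..K} - A \<noteq> {}"
  proof
    assume "{1..K} - A = {}"
    then have "card {1..K} \<le> card A" using assms by (intro card_mono) (auto intro: finite_subset)
    then show False using assms by simp
  qed
  then have "calJ K J A \<in> J ` ({1..K} - A)" unfolding calJ_def by (intro Min_in) auto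
  then have "\<exists>j. j \<in> {1..K} - A \<and> J j = calJ K J A" by auto
  then show ?thesis unfolding weakest_noise_def by (rule someI_ex)
qed

lemma weakest_signal:
  assumes "A \<subseteq> {1..K}" "A \<noteq> {}"
  shows "weakest_signal A \<in> A \<and> I (weakest_signal A) = calI I A"
proof -
  have "calI I A \<in> I ` A" unfolding calI_def using assms by (intro Min_in) (auto intro: finite_subset)
  then have "\<exists>i. i \<in> A \<and> I i = calI I A" by auto
  then show ?thesis unfolding weakest_signal_def by (rule someI_ex)
qed

lemma drift_eq_two_streams:
  assumes "\<And>k. k \<in> {1..K} \<Longrightarrow> drift_rate A A' k = (if k = p then x else 0) + (if k = q then y else 0)"
    and "p \<in> {1..K}" "q \<in> {1..K}"
  shows "drift A A' = x + y"
proof -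
  have "drift A A' = (\<Sum>k\<in>{1..K}. (if k = p then x else 0) + (if k = q then y else 0))"
    unfolding drift_def by (rule sum.cong) (auto simp: assms(1))
  also have "\<dots> = x + y" using assms(2,3) by (simp add: sum.distrib)
  finally show ?thesis .
qed

lemma rate_signal_pos:
  assumes "A \<in> Pi_lu K l u" "i \<in> A"
  shows "0 < rate_signal A i"
proof -
  have iK: "i \<in> {1..K}" using assms by (auto simp: Pi_lu_def)
  show ?thesis
  proof (cases "card A = l")
    case True
    then have "weakest_noise A \<in> {1..K} - A \<and> J (weakest_noise A) = calJ K J A"
      using assms lu by (intro weakest_noise) (auto simp: Pi_lu_def)
    then have "0 < calJ K J A" using IJpos[of "weakest_noise A"] by auto
    then show ?thesis using IJpos[OF iK] True by (simp add: rate_signal_def)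
  qed (use IJpos[OF iK] in \<open>simp add: rate_signal_def\<close>)
qed

lemma rate_noise_pos:
  assumes "A \<in> Pi_lu K l u" "j \<in> {1..K} - A"
  shows "0 < rate_noise A j"
proof (cases "card A = u")
  case True
  then have "weakest_signal A \<in> A \<and> I (weakest_signal A) = calI I A"
    using assms lu by (intro weakest_signal) (auto simp: Pi_lu_def)
  then have "0 < calI I A" using IJpos[of "weakest_signal A"] assms by (auto simp: Pi_lu_def)
  then show ?thesis using IJpos[of j] assms True by (simp add: rate_noise_def)
qed (use IJpos[of j] assms in \<open>simp add: rate_noise_def\<close>)

lemma drop_signal:
  assumes A: "A \<in> Pi_lu K l u" and i: "i \<in> A"
  shows "drop_signal A i \<in> Pi_lu K l u \<and> i \<notin> drop_signal A i \<and> drift A (drop_signal A i) = rate_signal A i"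
proof -
  have AK: "A \<subseteq> {1..K}" "l \<le> card A" "card A \<le> u" using A by (auto simp: Pi_lu_def)
  have fin: "finite A" using AK(1) by (rule finite_subset) simp
  have iK: "i \<in> {1..K}" using i AK by auto
  show ?thesis
  proof (cases "card A = l")
    case True
    have j: "weakest_noise A \<in> {1..K} - A \<and> J (weakest_noise A) = calJ K J A"
      using AK True lu by (intro weakest_noise) auto
    have "card (insert (weakest_noise A) (A - {i})) = card A"
      using j i fin by (simp add: card_insert_if) (metis One_nat_def Suc_pred card_gt_0_iff empty_iff)
    then have "insert (weakest_noise A) (A - {i}) \<in> Pi_lu K l u" using AK j by (auto simp: Pi_lu_def)
    moreover have "drift A (insert (weakest_noise A) (A - {i})) = I i + J (weakest_noise A)"
      by (rule drift_eq_two_streams[where p=i and q="weakest_noise A"])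
        (use j i iK in \<open>auto simp: drift_rate_def\<close>)
    ultimately show ?thesis using True j i by (auto simp: drop_signal_def rate_signal_def)
  next
    case False
    have "A - {i} \<in> Pi_lu K l u" using i fin AK False by (auto simp: Pi_lu_def)
    moreover have "drift A (A - {i}) = I i + 0"
      by (rule drift_eq_two_streams[where p=i and q=i]) (use i iK in \<open>auto simp: drift_rate_def\<close>)
    ultimately show ?thesis using False by (simp add: drop_signal_def rate_signal_def)
  qed
qed

lemma add_signal:
  assumes A: "A \<in> Pi_lu K l u" and j: "j \<in> {1..K} - A"
  shows "add_signal A j \<in> Pi_lu K l u \<and> j \<in> add_signal A j \<and> drift A (add_signal A j) = rate_noise A j"
proof -
  have AK: "A \<subseteq> {1..K}" "l \<le> card A" "card A \<le> u" using A by (auto simp: Pi_lu_def)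
  have fin: "finite A" using AK(1) by (rule finite_subset) simp
  show ?thesis
  proof (cases "card A = u")
    case True
    have ne: "A \<noteq> {}" using True lu by auto
    have i: "weakest_signal A \<in> A \<and> I (weakest_signal A) = calI I A"
      using AK ne by (intro weakest_signal) auto
    have "card (insert j (A - {weakest_signal A})) = card A"
      using i j fin ne by (simp add: card_insert_if) (metis One_nat_def Suc_pred card_gt_0_iff)
    then have "insert j (A - {weakest_signal A}) \<in> Pi_lu K l u" using AK j by (auto simp: Pi_lu_def)
    moreover have "drift A (insert j (A - {weakest_signal A})) = J j + I (weakest_signal A)"
      by (rule drift_eq_two_streams[where p=j and q="weakest_signal A"])
        (use i j AK in \<open>auto simp: drift_rate_def\<close>)
    ultimately show ?thesis using True i by (simp add: add_signal_def rate_noise_def)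
  next
    case False
    have "insert j A \<in> Pi_lu K l u" using j fin AK False by (auto simp: Pi_lu_def)
    moreover have "drift A (insert j A) = J j + 0"
      by (rule drift_eq_two_streams[where p=j and q=j]) (use j in \<open>auto simp: drift_rate_def\<close>)
    ultimately show ?thesis using False by (simp add: add_signal_def rate_noise_def)
  qed
qed

lemma measure_accept_le_FWE1:
  assumes proc: "is_procedure K M P0 P1 T D" and j: "j \<in> {1..K} - A"
  shows "measure (PA K P0 P1 A) {\<omega>\<in>space (joint_space K M). D j \<omega>} \<le> FWE1 K P0 P1 D A"
proof -
  interpret prob_space "PA K P0 P1 A" by (rule prob_space_PA)
  have "(\<Union>j\<in>{1..K} - A. {\<omega>\<in>space (joint_space K M). D j \<omega>}) \<in> sets (PA K P0 P1 A)"
    using proc unfolding is_procedure_def sets_PA by auto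
  moreover have "(\<Union>j\<in>{1..K} - A. {\<omega>\<in>space (joint_space K M). D j \<omega>})
                   = {\<omega>\<in>space (PA K P0 P1 A). \<exists>j\<in>{1..K} - A. D j \<omega>}"
    by (auto simp: space_PA)
  ultimately show ?thesis
    unfolding FWE1_def using j by (intro finite_measure_mono) (auto simp: space_PA)
qed

lemma measure_reject_le_FWE2:
  assumes proc: "is_procedure K M P0 P1 T D" and A: "A \<subseteq> {1..K}" and i: "i \<in> A"
  shows "measure (PA K P0 P1 A) {\<omega>\<in>space (joint_space K M). \<not> D i \<omega>} \<le> FWE2 K P0 P1 D A"
proof -
  interpret prob_space "PA K P0 P1 A" by (rule prob_space_PA)
  have "(\<Union>i\<in>A. space (joint_space K M) - {\<omega>\<in>space (joint_space K M). D i \<omega>}) \<in> sets (PA K P0 P1 A)"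
    using proc A unfolding is_procedure_def sets_PA by (intro sets.finite_UN) (auto intro: finite_subset)
  moreover have "(\<Union>i\<in>A. space (joint_space K M) - {\<omega>\<in>space (joint_space K M). D i \<omega>})
                   = {\<omega>\<in>space (PA K P0 P1 A). \<exists>i\<in>A. \<not> D i \<omega>}"
    by (auto simp: space_PA)
  ultimately show ?thesis
    unfolding FWE2_def using i by (intro finite_measure_mono) (auto simp: space_PA)
qed

lemma ExpT_ge_of_error_bounds:
  assumes proc: "is_procedure K M P0 P1 T D" and k: "k \<in> {1..K}"
    and wrong: "measure (PA K P0 P1 A) {\<omega>\<in>space (joint_space K M). D k \<omega> \<noteq> v} \<le> y"
    and right: "measure (PA K P0 P1 A') {\<omega>\<in>space (joint_space K M). D k \<omega> = v} \<le> x"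
    and x: "0 < x" "x < 1" and \<epsilon>: "0 < \<epsilon>" "\<epsilon> < 1" and R: "drift A A' = R" "0 < R"
  shows "ennreal (real (horizon R \<epsilon> x) * (1 - y - x powr \<epsilon> - overshoot A A' \<epsilon> (horizon R \<epsilon> x)))
           \<le> ExpT K P0 P1 A (T k)"
proof -
  let ?N = "horizon R \<epsilon> x"
  let ?L = "(1 + \<epsilon>) * R * real ?N"
  have "exp ?L * measure (PA K P0 P1 A') {\<omega>\<in>space (joint_space K M). D k \<omega> = v} \<le> exp ?L * x"
    using right by (rule mult_left_mono) simp
  also have "\<dots> \<le> x powr \<epsilon>" by (rule exp_horizon_mult_le_powr[OF x \<epsilon> R(2)])
  finally have "real ?N * (1 - y - x powr \<epsilon> - overshoot A A' \<epsilon> ?N)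
      \<le> real ?N * (1 - measure (PA K P0 P1 A) {\<omega>\<in>space (joint_space K M). D k \<omega> \<noteq> v}
          - exp ?L * measure (PA K P0 P1 A') {\<omega>\<in>space (joint_space K M). D k \<omega> = v}
          - overshoot A A' \<epsilon> ?N)"
    using wrong by (intro mult_left_mono) auto
  also have "ennreal \<dots> \<le> ExpT K P0 P1 A (T k)"
    using ExpT_ge_change_of_measure[OF proc k, of ?N A v ?L A'] by (simp add: overshoot_def R(1))
  finally show ?thesis by (simp add: ennreal_leI)
qed

lemma ExpT_signal_ge:
  assumes A: "A \<in> Pi_lu K l u" and i: "i \<in> A"
    and \<Delta>: "in_Delta K M P0 P1 \<alpha> \<beta> (Pi_lu K l u) T D"
    and \<alpha>: "0 < \<alpha>" "\<alpha> < 1" and \<epsilon>: "0 < \<epsilon>" "\<epsilon> < 1"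
  shows "ennreal (real (horizon (rate_signal A i) \<epsilon> \<alpha>) * (1 - \<beta> - \<alpha> powr \<epsilon>
            - overshoot A (drop_signal A i) \<epsilon> (horizon (rate_signal A i) \<epsilon> \<alpha>)))
           \<le> ExpT K P0 P1 A (T i)"
proof -
  have proc: "is_procedure K M P0 P1 T D" using \<Delta> by (simp add: in_Delta_def)
  have alt: "drop_signal A i \<in> Pi_lu K l u" "i \<notin> drop_signal A i"
    "drift A (drop_signal A i) = rate_signal A i"
    using drop_signal[OF A i] by auto
  have AK: "A \<subseteq> {1..K}" using A by (simp add: Pi_lu_def)
  show ?thesis
  proof (rule ExpT_ge_of_error_bounds[OF proc _ _ _ \<alpha> \<epsilon> alt(3) rate_signal_pos[OF A i]])
    show "i \<in> {1..K}" using AK i by auto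
    show "measure (PA K P0 P1 A) {\<omega>\<in>space (joint_space K M). D i \<omega> \<noteq> True} \<le> \<beta>"
      using measure_reject_le_FWE2[OF proc AK i] \<Delta> A by (auto simp: in_Delta_def)
    show "measure (PA K P0 P1 (drop_signal A i)) {\<omega>\<in>space (joint_space K M). D i \<omega> = True} \<le> \<alpha>"
      using measure_accept_le_FWE1[OF proc, of i "drop_signal A i"] \<Delta> alt AK i
      by (fastforce simp: in_Delta_def)
  qed
qed

lemma ExpT_noise_ge:
  assumes A: "A \<in> Pi_lu K l u" and j: "j \<in> {1..K} - A"
    and \<Delta>: "in_Delta K M P0 P1 \<alpha> \<beta> (Pi_lu K l u) T D"
    and \<beta>: "0 < \<beta>" "\<beta> < 1" and \<epsilon>: "0 < \<epsilon>" "\<epsilon> < 1"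
  shows "ennreal (real (horizon (rate_noise A j) \<epsilon> \<beta>) * (1 - \<alpha> - \<beta> powr \<epsilon>
            - overshoot A (add_signal A j) \<epsilon> (horizon (rate_noise A j) \<epsilon> \<beta>)))
           \<le> ExpT K P0 P1 A (T j)"
proof -
  have proc: "is_procedure K M P0 P1 T D" using \<Delta> by (simp add: in_Delta_def)
  have alt: "add_signal A j \<in> Pi_lu K l u" "j \<in> add_signal A j" "drift A (add_signal A j) = rate_noise A j"
    using add_signal[OF A j] by auto
  have altK: "add_signal A j \<subseteq> {1..K}" using alt(1) by (simp add: Pi_lu_def)
  show ?thesis
  proof (rule ExpT_ge_of_error_bounds[OF proc _ _ _ \<beta> \<epsilon> alt(3) rate_noise_pos[OF A j]])
    show "j \<in> {1..K}" using j by auto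
    show "measure (PA K P0 P1 A) {\<omega>\<in>space (joint_space K M). D j \<omega> \<noteq> False} \<le> \<alpha>"
      using measure_accept_le_FWE1[OF proc j] \<Delta> A by (auto simp: in_Delta_def)
    show "measure (PA K P0 P1 (add_signal A j)) {\<omega>\<in>space (joint_space K M). D j \<omega> = False} \<le> \<beta>"
      using measure_reject_le_FWE2[OF proc altK alt(2)] \<Delta> alt by (fastforce simp: in_Delta_def)
  qed
qed

end

section \<open>Asymptotic optimality\<close>

lemma tendsto_fst_at_right_0: "(fst \<longlongrightarrow> (0::real)) (at_right 0 \<times>\<^sub>F at_right (0::real))"
  using filterlim_fst[of "at_right (0::real)" "at_right (0::real)"] by (simp add: filterlim_at)

lemma tendsto_snd_at_right_0: "(snd \<longlongrightarrow> (0::real)) (at_right (0::real) \<times>\<^sub>F at_right 0)"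
  using filterlim_snd[of "at_right (0::real)" "at_right (0::real)"] by (simp add: filterlim_at)

lemma eventually_in_unit_square:
  "\<forall>\<^sub>F z in at_right 0 \<times>\<^sub>F at_right 0. 0 < fst z \<and> fst z < (1::real) \<and> 0 < snd z \<and> snd z < (1::real)"
proof -
  have unit: "eventually (\<lambda>x::real. 0 < x \<and> x < 1) (at_right 0)"
    using eventually_at_right_real[of 0 1] by simp
  show ?thesis
    using eventually_conj[OF eventually_compose_filterlim[OF unit filterlim_fst]
        eventually_compose_filterlim[OF unit filterlim_snd]] by simp
qed

lemma le_enn2real_if_ennreal_le:
  assumes "ennreal v \<le> x" "x < top"
  shows "v \<le> enn2real x"
proof (cases "v \<le> 0")
  case False
  then show ?thesis using enn2real_mono[OF assms] by simp
qed (meson enn2real_nonneg order_trans)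

lemma Lopt_le_ExpT:
  "in_Delta K M P0 P1 \<alpha> \<beta> PS T D \<Longrightarrow> Lopt K M P0 P1 \<alpha> \<beta> PS k A \<le> ExpT K P0 P1 A (T k)"
  unfolding Lopt_def by (rule INF_lower2[of "(T, D)"]) auto

lemma le_enn2real_Lopt:
  assumes "\<And>T D. in_Delta K M P0 P1 \<alpha> \<beta> PS T D \<Longrightarrow> ennreal v \<le> ExpT K P0 P1 A (T k)"
    and "Lopt K M P0 P1 \<alpha> \<beta> PS k A < \<infinity>"
  shows "v \<le> enn2real (Lopt K M P0 P1 \<alpha> \<beta> PS k A)"
proof (rule le_enn2real_if_ennreal_le)
  show "ennreal v \<le> Lopt K M P0 P1 \<alpha> \<beta> PS k A"
    unfolding Lopt_def using assms(1) by (intro INF_greatest) auto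
qed (use assms(2) in simp)

context sequential_test
begin

lemma asymp_ExpT_Lopt_of_bounds:
  fixes T :: "real \<times> real \<Rightarrow> nat \<Rightarrow> (nat \<Rightarrow> nat \<Rightarrow> 'x) \<Rightarrow> enat"
    and D :: "real \<times> real \<Rightarrow> nat \<Rightarrow> (nat \<Rightarrow> nat \<Rightarrow> 'x) \<Rightarrow> bool"
    and x y thr :: "real \<times> real \<Rightarrow> real"
  assumes R: "0 < R"
    and x: "(x \<longlongrightarrow> 0) (at_right 0 \<times>\<^sub>F at_right 0)" "\<forall>\<^sub>F z in at_right 0 \<times>\<^sub>F at_right 0. 0 < x z"
    and y: "(y \<longlongrightarrow> 0) (at_right 0 \<times>\<^sub>F at_right 0)"
    and thr: "thr \<sim>[at_right 0 \<times>\<^sub>F at_right 0] (\<lambda>z. \<bar>ln (x z)\<bar>)"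
    and member: "\<forall>\<^sub>F z in at_right 0 \<times>\<^sub>F at_right 0.
                   in_Delta K M P0 P1 (fst z) (snd z) (Pi_lu K l u) (T z) (D z)"
    and upper: "\<And>\<epsilon>. 0 < \<epsilon> \<Longrightarrow> \<epsilon> < R \<Longrightarrow> \<exists>C. \<forall>\<^sub>F z in at_right 0 \<times>\<^sub>F at_right 0.
                   ExpT K P0 P1 A (T z k) \<le> ennreal (thr z / (R - \<epsilon>) + C) \<and> 0 \<le> thr z / (R - \<epsilon>) + C"
    and lower: "\<And>\<epsilon>. 0 < \<epsilon> \<Longrightarrow> \<epsilon> < 1 \<Longrightarrow> \<exists>p. p \<longlonglongrightarrow> 0 \<and> (\<forall>\<^sub>F z in at_right 0 \<times>\<^sub>F at_right 0.
                   \<forall>T' D'. in_Delta K M P0 P1 (fst z) (snd z) (Pi_lu K l u) T' D' \<longrightarrow>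
                     ennreal (real (horizon R \<epsilon> (x z)) * (1 - y z - x z powr \<epsilon> - p (horizon R \<epsilon> (x z))))
                       \<le> ExpT K P0 P1 A (T' k))"
  shows "(\<forall>\<^sub>F z in at_right 0 \<times>\<^sub>F at_right 0. ExpT K P0 P1 A (T z k) \<noteq> \<infinity> \<and>
            Lopt K M P0 P1 (fst z) (snd z) (Pi_lu K l u) k A \<noteq> \<infinity>) \<and>
         (\<lambda>z. enn2real (ExpT K P0 P1 A (T z k))) \<sim>[at_right 0 \<times>\<^sub>F at_right 0] (\<lambda>z. \<bar>ln (x z)\<bar> / R) \<and>
         (\<lambda>z. enn2real (Lopt K M P0 P1 (fst z) (snd z) (Pi_lu K l u) k A))
           \<sim>[at_right 0 \<times>\<^sub>F at_right 0] (\<lambda>z. \<bar>ln (x z)\<bar> / R)"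
proof -
  let ?F = "at_right (0::real) \<times>\<^sub>F at_right (0::real)"
  define E where "E z = ExpT K P0 P1 A (T z k)" for z
  define L where "L z = Lopt K M P0 P1 (fst z) (snd z) (Pi_lu K l u) k A" for z
  have L_le_E: "\<forall>\<^sub>F z in ?F. L z \<le> E z"
    using member by eventually_elim (simp add: L_def E_def Lopt_le_ExpT)
  obtain C where "\<forall>\<^sub>F z in ?F. E z \<le> ennreal (thr z / (R - R / 2) + C) \<and> 0 \<le> thr z / (R - R / 2) + C"
    using upper[of "R / 2"] R unfolding E_def by auto
  with L_le_E have finite: "\<forall>\<^sub>F z in ?F. E z < \<infinity> \<and> L z < \<infinity>"
  proof eventually_elim
    case (elim z)
    then have "E z < \<infinity>" by (metis ennreal_less_top infinity_ennreal_def le_less_trans)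
    then show ?case using elim(1) by (simp add: le_less_trans)
  qed
  have upper': "\<exists>C. \<forall>\<^sub>F z in ?F. enn2real (E z) \<le> thr z / (R - \<epsilon>) + C" if \<epsilon>: "0 < \<epsilon>" "\<epsilon> < R" for \<epsilon>
  proof -
    obtain C where "\<forall>\<^sub>F z in ?F. E z \<le> ennreal (thr z / (R - \<epsilon>) + C) \<and> 0 \<le> thr z / (R - \<epsilon>) + C"
      using upper[OF \<epsilon>] unfolding E_def by blast
    then show ?thesis by (intro exI[of _ C]) (auto elim!: eventually_mono intro: enn2real_leI)
  qed
  have lower': "\<exists>p. p \<longlonglongrightarrow> 0 \<and> (\<forall>\<^sub>F z in ?F.
      real (horizon R \<epsilon> (x z)) * (1 - y z - x z powr \<epsilon> - p (horizon R \<epsilon> (x z))) \<le> enn2real (L z))"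
    if \<epsilon>: "0 < \<epsilon>" "\<epsilon> < 1" for \<epsilon>
  proof -
    obtain p where p: "p \<longlonglongrightarrow> 0" and bound: "\<forall>\<^sub>F z in ?F. \<forall>T' D'.
        in_Delta K M P0 P1 (fst z) (snd z) (Pi_lu K l u) T' D' \<longrightarrow>
          ennreal (real (horizon R \<epsilon> (x z)) * (1 - y z - x z powr \<epsilon> - p (horizon R \<epsilon> (x z))))
            \<le> ExpT K P0 P1 A (T' k)"
      using lower[OF \<epsilon>] by blast
    have "\<forall>\<^sub>F z in ?F. real (horizon R \<epsilon> (x z)) * (1 - y z - x z powr \<epsilon> - p (horizon R \<epsilon> (x z)))
                        \<le> enn2real (L z)"
      using bound finite unfolding L_def by eventually_elim (rule le_enn2real_Lopt; blast)
    with p show ?thesis by blast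
  qed
  have "\<forall>\<^sub>F z in ?F. enn2real (L z) \<le> enn2real (E z)"
    using L_le_E finite by eventually_elim (auto intro: enn2real_mono)
  note bounds = asymp_equiv_of_bounds[OF R x y thr upper' lower' this]
  have "\<forall>\<^sub>F z in ?F. E z \<noteq> \<infinity> \<and> L z \<noteq> \<infinity>"
    using finite by eventually_elim auto
  with bounds show ?thesis unfolding E_def L_def by blast
qed

end

locale tuned_sequential_test = sequential_test K M P0 P1 llr I J l u
  for K M and P0 P1 :: "nat \<Rightarrow> (nat \<Rightarrow> 'x) measure" and llr I J l u +
  fixes a b c d :: "real \<Rightarrow> real \<Rightarrow> real"
  assumes thresholds: "\<And>\<alpha> \<beta>. 0 < \<alpha> \<Longrightarrow> \<alpha> < 1 \<Longrightarrow> 0 < \<beta> \<Longrightarrow> \<beta> < 1 \<Longrightarrow>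
                 0 < a \<alpha> \<beta> \<and> 0 < b \<alpha> \<beta> \<and> 0 < c \<alpha> \<beta> \<and> 0 < d \<alpha> \<beta> \<and>
                 in_Delta K M P0 P1 \<alpha> \<beta> (Pi_lu K l u)
                   (hatT K l u llr (a \<alpha> \<beta>) (b \<alpha> \<beta>) (c \<alpha> \<beta>) (d \<alpha> \<beta>))
                   (hatD K l u llr (a \<alpha> \<beta>) (b \<alpha> \<beta>) (c \<alpha> \<beta>) (d \<alpha> \<beta>))"
    and a_asymp: "(\<lambda>(\<alpha>, \<beta>). a \<alpha> \<beta>) \<sim>[at_right 0 \<times>\<^sub>F at_right 0] (\<lambda>(\<alpha>, \<beta>). \<bar>ln \<alpha>\<bar>)"
    and c_asymp: "(\<lambda>(\<alpha>, \<beta>). c \<alpha> \<beta>) \<sim>[at_right 0 \<times>\<^sub>F at_right 0] (\<lambda>(\<alpha>, \<beta>). \<bar>ln \<alpha>\<bar>)"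
    and b_asymp: "(\<lambda>(\<alpha>, \<beta>). b \<alpha> \<beta>) \<sim>[at_right 0 \<times>\<^sub>F at_right 0] (\<lambda>(\<alpha>, \<beta>). \<bar>ln \<beta>\<bar>)"
    and d_asymp: "(\<lambda>(\<alpha>, \<beta>). d \<alpha> \<beta>) \<sim>[at_right 0 \<times>\<^sub>F at_right 0] (\<lambda>(\<alpha>, \<beta>). \<bar>ln \<beta>\<bar>)"
begin

definition hat_T :: "real \<times> real \<Rightarrow> nat \<Rightarrow> (nat \<Rightarrow> nat \<Rightarrow> 'x) \<Rightarrow> enat" where
  "hat_T z = hatT K l u llr (a (fst z) (snd z)) (b (fst z) (snd z)) (c (fst z) (snd z)) (d (fst z) (snd z))"

definition hat_D :: "real \<times> real \<Rightarrow> nat \<Rightarrow> (nat \<Rightarrow> nat \<Rightarrow> 'x) \<Rightarrow> bool" where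
  "hat_D z = hatD K l u llr (a (fst z) (snd z)) (b (fst z) (snd z)) (c (fst z) (snd z)) (d (fst z) (snd z))"

lemma eventually_thresholds:
  "\<forall>\<^sub>F z in at_right 0 \<times>\<^sub>F at_right 0.
     0 < a (fst z) (snd z) \<and> 0 < b (fst z) (snd z) \<and> 0 < c (fst z) (snd z) \<and> 0 < d (fst z) (snd z) \<and>
     in_Delta K M P0 P1 (fst z) (snd z) (Pi_lu K l u) (hat_T z) (hat_D z)"
  using eventually_in_unit_square by eventually_elim (simp add: thresholds hat_T_def hat_D_def)

lemma signal_asymptotics:
  assumes A: "A \<in> Pi_lu K l u" and i: "i \<in> A"
  shows "(\<forall>\<^sub>F z in at_right 0 \<times>\<^sub>F at_right 0. ExpT K P0 P1 A (hat_T z i) \<noteq> \<infinity> \<and>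
            Lopt K M P0 P1 (fst z) (snd z) (Pi_lu K l u) i A \<noteq> \<infinity>) \<and>
         (\<lambda>z. enn2real (ExpT K P0 P1 A (hat_T z i)))
           \<sim>[at_right 0 \<times>\<^sub>F at_right 0] (\<lambda>z. \<bar>ln (fst z)\<bar> / rate_signal A i) \<and>
         (\<lambda>z. enn2real (Lopt K M P0 P1 (fst z) (snd z) (Pi_lu K l u) i A))
           \<sim>[at_right 0 \<times>\<^sub>F at_right 0] (\<lambda>z. \<bar>ln (fst z)\<bar> / rate_signal A i)"
proof (rule asymp_ExpT_Lopt_of_bounds[where D = hat_D, OF rate_signal_pos[OF A i] tendsto_fst_at_right_0 _
      tendsto_snd_at_right_0 _ eventually_mono[OF eventually_thresholds]])
  let ?thr = "\<lambda>z. if card A = l then c (fst z) (snd z) else a (fst z) (snd z)"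
  have AK: "A \<subseteq> {1..K}" "l \<le> card A" "card A \<le> u" using A by (auto simp: Pi_lu_def)
  show "\<forall>\<^sub>F z in at_right (0::real) \<times>\<^sub>F at_right (0::real). 0 < fst z"
    by (rule eventually_mono[OF eventually_in_unit_square]) simp
  show "?thr \<sim>[at_right 0 \<times>\<^sub>F at_right 0] (\<lambda>z. \<bar>ln (fst z)\<bar>)"
    using a_asymp c_asymp by (cases "card A = l") (simp_all add: case_prod_unfold)
  fix \<epsilon> :: real
  assume \<epsilon>: "0 < \<epsilon>" "\<epsilon> < rate_signal A i"
  have "\<forall>\<^sub>F z in at_right 0 \<times>\<^sub>F at_right 0.
      ExpT K P0 P1 A (hat_T z i) \<le> ennreal (?thr z / (rate_signal A i - \<epsilon>) + (2 + bad_mass A (\<epsilon> / 2))) \<and>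
      0 \<le> ?thr z / (rate_signal A i - \<epsilon>) + (2 + bad_mass A (\<epsilon> / 2))"
    using eventually_thresholds
  proof eventually_elim
    case (elim z)
    then have proc: "is_procedure K M P0 P1 (hatT K l u llr (a (fst z) (snd z)) (b (fst z) (snd z))
                 (c (fst z) (snd z)) (d (fst z) (snd z))) (hat_D z)"
      by (simp add: in_Delta_def hat_T_def)
    have "ExpT K P0 P1 A (hat_T z i) \<le> ennreal (?thr z / (rate_signal A i - \<epsilon>) + 2 + bad_mass A (\<epsilon> / 2))"
      unfolding hat_T_def by (rule ExpT_hatT_signal_le[OF AK i \<epsilon> _ _ proc]) (use elim in auto)
    moreover have "0 \<le> ?thr z / (rate_signal A i - \<epsilon>)" using elim \<epsilon> by auto
    ultimately show ?case using bad_mass_nonneg[of "\<epsilon> / 2" A] \<epsilon> by (simp add: add.assoc)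
  qed
  then show "\<exists>C. \<forall>\<^sub>F z in at_right 0 \<times>\<^sub>F at_right 0. ExpT K P0 P1 A (hat_T z i)
      \<le> ennreal (?thr z / (rate_signal A i - \<epsilon>) + C) \<and> 0 \<le> ?thr z / (rate_signal A i - \<epsilon>) + C"
    by blast
next
  fix \<epsilon> :: real
  assume \<epsilon>: "0 < \<epsilon>" "\<epsilon> < 1"
  show "\<exists>p. p \<longlonglongrightarrow> 0 \<and> (\<forall>\<^sub>F z in at_right 0 \<times>\<^sub>F at_right 0. \<forall>T D.
          in_Delta K M P0 P1 (fst z) (snd z) (Pi_lu K l u) T D \<longrightarrow>
            ennreal (real (horizon (rate_signal A i) \<epsilon> (fst z)) * (1 - snd z - fst z powr \<epsilon>
              - p (horizon (rate_signal A i) \<epsilon> (fst z)))) \<le> ExpT K P0 P1 A (T i))"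
    using overshoot_tendsto_0[of A "drop_signal A i" \<epsilon>] drop_signal[OF A i] rate_signal_pos[OF A i] \<epsilon>
      eventually_in_unit_square
    by (intro exI[of _ "overshoot A (drop_signal A i) \<epsilon>"])
      (auto elim!: eventually_mono intro!: ExpT_signal_ge[OF A i _ _ _ \<epsilon>])
qed simp

lemma noise_asymptotics:
  assumes A: "A \<in> Pi_lu K l u" and j: "j \<in> {1..K} - A"
  shows "(\<forall>\<^sub>F z in at_right 0 \<times>\<^sub>F at_right 0. ExpT K P0 P1 A (hat_T z j) \<noteq> \<infinity> \<and>
            Lopt K M P0 P1 (fst z) (snd z) (Pi_lu K l u) j A \<noteq> \<infinity>) \<and>
         (\<lambda>z. enn2real (ExpT K P0 P1 A (hat_T z j)))
           \<sim>[at_right 0 \<times>\<^sub>F at_right 0] (\<lambda>z. \<bar>ln (snd z)\<bar> / rate_noise A j) \<and>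
         (\<lambda>z. enn2real (Lopt K M P0 P1 (fst z) (snd z) (Pi_lu K l u) j A))
           \<sim>[at_right 0 \<times>\<^sub>F at_right 0] (\<lambda>z. \<bar>ln (snd z)\<bar> / rate_noise A j)"
proof (rule asymp_ExpT_Lopt_of_bounds[where D = hat_D, OF rate_noise_pos[OF A j] tendsto_snd_at_right_0 _
      tendsto_fst_at_right_0 _ eventually_mono[OF eventually_thresholds]])
  let ?thr = "\<lambda>z. if card A = u then d (fst z) (snd z) else b (fst z) (snd z)"
  have AK: "A \<subseteq> {1..K}" "l \<le> card A" "card A \<le> u" using A by (auto simp: Pi_lu_def)
  show "\<forall>\<^sub>F z in at_right (0::real) \<times>\<^sub>F at_right (0::real). 0 < snd z"
    by (rule eventually_mono[OF eventually_in_unit_square]) simp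
  show "?thr \<sim>[at_right 0 \<times>\<^sub>F at_right 0] (\<lambda>z. \<bar>ln (snd z)\<bar>)"
    using b_asymp d_asymp by (cases "card A = u") (simp_all add: case_prod_unfold)
  fix \<epsilon> :: real
  assume \<epsilon>: "0 < \<epsilon>" "\<epsilon> < rate_noise A j"
  have "\<forall>\<^sub>F z in at_right 0 \<times>\<^sub>F at_right 0.
      ExpT K P0 P1 A (hat_T z j) \<le> ennreal (?thr z / (rate_noise A j - \<epsilon>) + (2 + bad_mass A (\<epsilon> / 2))) \<and>
      0 \<le> ?thr z / (rate_noise A j - \<epsilon>) + (2 + bad_mass A (\<epsilon> / 2))"
    using eventually_thresholds
  proof eventually_elim
    case (elim z)
    then have proc: "is_procedure K M P0 P1 (hatT K l u llr (a (fst z) (snd z)) (b (fst z) (snd z))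
                 (c (fst z) (snd z)) (d (fst z) (snd z))) (hat_D z)"
      by (simp add: in_Delta_def hat_T_def)
    have "ExpT K P0 P1 A (hat_T z j) \<le> ennreal (?thr z / (rate_noise A j - \<epsilon>) + 2 + bad_mass A (\<epsilon> / 2))"
      unfolding hat_T_def by (rule ExpT_hatT_noise_le[OF AK j \<epsilon> _ _ proc]) (use elim in auto)
    moreover have "0 \<le> ?thr z / (rate_noise A j - \<epsilon>)" using elim \<epsilon> by auto
    ultimately show ?case using bad_mass_nonneg[of "\<epsilon> / 2" A] \<epsilon> by (simp add: add.assoc)
  qed
  then show "\<exists>C. \<forall>\<^sub>F z in at_right 0 \<times>\<^sub>F at_right 0. ExpT K P0 P1 A (hat_T z j)
      \<le> ennreal (?thr z / (rate_noise A j - \<epsilon>) + C) \<and> 0 \<le> ?thr z / (rate_noise A j - \<epsilon>) + C"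
    by blast
next
  fix \<epsilon> :: real
  assume \<epsilon>: "0 < \<epsilon>" "\<epsilon> < 1"
  show "\<exists>p. p \<longlonglongrightarrow> 0 \<and> (\<forall>\<^sub>F z in at_right 0 \<times>\<^sub>F at_right 0. \<forall>T D.
          in_Delta K M P0 P1 (fst z) (snd z) (Pi_lu K l u) T D \<longrightarrow>
            ennreal (real (horizon (rate_noise A j) \<epsilon> (snd z)) * (1 - fst z - snd z powr \<epsilon>
              - p (horizon (rate_noise A j) \<epsilon> (snd z)))) \<le> ExpT K P0 P1 A (T j))"
    using overshoot_tendsto_0[of A "add_signal A j" \<epsilon>] add_signal[OF A j] rate_noise_pos[OF A j] \<epsilon>
      eventually_in_unit_square
    by (intro exI[of _ "overshoot A (add_signal A j) \<epsilon>"])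
      (auto elim!: eventually_mono intro!: ExpT_noise_ge[OF A j _ _ _ \<epsilon>])
qed simp

end

theorem theorem5p2:
  fixes K l u :: nat
    and M :: "nat \<Rightarrow> 'x measure"
    and P0 P1 :: "nat \<Rightarrow> (nat \<Rightarrow> 'x) measure"
    and llr :: "nat \<Rightarrow> nat \<Rightarrow> (nat \<Rightarrow> 'x) \<Rightarrow> real"
    and I J :: "nat \<Rightarrow> real"
    and a b c d :: "real \<Rightarrow> real \<Rightarrow> real"
  assumes lu: "l \<le> u" "u \<le> K" "0 < u" "l < K"
    and laws: "\<And>k. k \<in> {1..K} \<Longrightarrow> prob_space (P0 k) \<and> prob_space (P1 k) \<and>
                 sets (P0 k) = sets (strm_path_space M k) \<and> sets (P1 k) = sets (strm_path_space M k)"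
    and llr: "\<And>k n. k \<in> {1..K} \<Longrightarrow> 1 \<le> n \<Longrightarrow>
                 llr k n \<in> borel_measurable (stream_filt M k n) \<and>
                 (\<forall>B\<in>sets (stream_filt M k n).
                    emeasure (P1 k) B = (\<integral>\<^sup>+ x\<in>B. ennreal (exp (llr k n x)) \<partial>P0 k))"
    and IJpos: "\<And>k. k \<in> {1..K} \<Longrightarrow> 0 < I k \<and> 0 < J k"
    and limsupI: "\<And>k. k \<in> {1..K} \<Longrightarrow>
                 AE x in P1 k. limsup (\<lambda>n. ereal (llr k n x / real n)) \<le> ereal (I k)"
    and limsupJ: "\<And>k. k \<in> {1..K} \<Longrightarrow>
                 AE x in P0 k. limsup (\<lambda>n. ereal (- llr k n x / real n)) \<le> ereal (J k)"
    and compI: "\<And>k \<epsilon>. k \<in> {1..K} \<Longrightarrow> 0 < \<epsilon> \<Longrightarrow>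
                 summable (\<lambda>n. measure (P1 k)
                   {x \<in> space (P1 k). llr k (Suc n) x / real (Suc n) \<le> I k - \<epsilon>})"
    and compJ: "\<And>k \<epsilon>. k \<in> {1..K} \<Longrightarrow> 0 < \<epsilon> \<Longrightarrow>
                 summable (\<lambda>n. measure (P0 k)
                   {x \<in> space (P0 k). - llr k (Suc n) x / real (Suc n) \<le> J k - \<epsilon>})"
    and thresholds: "\<And>\<alpha> \<beta>. 0 < \<alpha> \<Longrightarrow> \<alpha> < 1 \<Longrightarrow> 0 < \<beta> \<Longrightarrow> \<beta> < 1 \<Longrightarrow>
                 0 < a \<alpha> \<beta> \<and> 0 < b \<alpha> \<beta> \<and> 0 < c \<alpha> \<beta> \<and> 0 < d \<alpha> \<beta> \<and>
                 in_Delta K M P0 P1 \<alpha> \<beta> (Pi_lu K l u)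
                   (hatT K l u llr (a \<alpha> \<beta>) (b \<alpha> \<beta>) (c \<alpha> \<beta>) (d \<alpha> \<beta>))
                   (hatD K l u llr (a \<alpha> \<beta>) (b \<alpha> \<beta>) (c \<alpha> \<beta>) (d \<alpha> \<beta>))"
    and a_asymp: "(\<lambda>(\<alpha>, \<beta>). a \<alpha> \<beta>) \<sim>[at_right 0 \<times>\<^sub>F at_right 0] (\<lambda>(\<alpha>, \<beta>). \<bar>ln \<alpha>\<bar>)"
    and c_asymp: "(\<lambda>(\<alpha>, \<beta>). c \<alpha> \<beta>) \<sim>[at_right 0 \<times>\<^sub>F at_right 0] (\<lambda>(\<alpha>, \<beta>). \<bar>ln \<alpha>\<bar>)"
    and b_asymp: "(\<lambda>(\<alpha>, \<beta>). b \<alpha> \<beta>) \<sim>[at_right 0 \<times>\<^sub>F at_right 0] (\<lambda>(\<alpha>, \<beta>). \<bar>ln \<beta>\<bar>)"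
    and d_asymp: "(\<lambda>(\<alpha>, \<beta>). d \<alpha> \<beta>) \<sim>[at_right 0 \<times>\<^sub>F at_right 0] (\<lambda>(\<alpha>, \<beta>). \<bar>ln \<beta>\<bar>)"
  shows "\<forall>A \<in> Pi_lu K l u.
     (\<forall>i \<in> A.
        (\<forall>\<^sub>F (\<alpha>, \<beta>) in at_right 0 \<times>\<^sub>F at_right 0.
            ExpT K P0 P1 A (hatT K l u llr (a \<alpha> \<beta>) (b \<alpha> \<beta>) (c \<alpha> \<beta>) (d \<alpha> \<beta>) i) \<noteq> \<infinity> \<and>
            Lopt K M P0 P1 \<alpha> \<beta> (Pi_lu K l u) i A \<noteq> \<infinity>) \<and>
        (\<lambda>(\<alpha>, \<beta>). enn2real (ExpT K P0 P1 A (hatT K l u llr (a \<alpha> \<beta>) (b \<alpha> \<beta>) (c \<alpha> \<beta>) (d \<alpha> \<beta>) i)))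
          \<sim>[at_right 0 \<times>\<^sub>F at_right 0]
        (\<lambda>(\<alpha>, \<beta>). \<bar>ln \<alpha>\<bar> / (I i + (if card A = l then calJ K J A else 0))) \<and>
        (\<lambda>(\<alpha>, \<beta>). enn2real (Lopt K M P0 P1 \<alpha> \<beta> (Pi_lu K l u) i A))
          \<sim>[at_right 0 \<times>\<^sub>F at_right 0]
        (\<lambda>(\<alpha>, \<beta>). \<bar>ln \<alpha>\<bar> / (I i + (if card A = l then calJ K J A else 0)))) \<and>
     (\<forall>j \<in> {1..K} - A.
        (\<forall>\<^sub>F (\<alpha>, \<beta>) in at_right 0 \<times>\<^sub>F at_right 0.
            ExpT K P0 P1 A (hatT K l u llr (a \<alpha> \<beta>) (b \<alpha> \<beta>) (c \<alpha> \<beta>) (d \<alpha> \<beta>) j) \<noteq> \<infinity> \<and>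
            Lopt K M P0 P1 \<alpha> \<beta> (Pi_lu K l u) j A \<noteq> \<infinity>) \<and>
        (\<lambda>(\<alpha>, \<beta>). enn2real (ExpT K P0 P1 A (hatT K l u llr (a \<alpha> \<beta>) (b \<alpha> \<beta>) (c \<alpha> \<beta>) (d \<alpha> \<beta>) j)))
          \<sim>[at_right 0 \<times>\<^sub>F at_right 0]
        (\<lambda>(\<alpha>, \<beta>). \<bar>ln \<beta>\<bar> / (J j + (if card A = u then calI I A else 0))) \<and>
        (\<lambda>(\<alpha>, \<beta>). enn2real (Lopt K M P0 P1 \<alpha> \<beta> (Pi_lu K l u) j A))
          \<sim>[at_right 0 \<times>\<^sub>F at_right 0]
        (\<lambda>(\<alpha>, \<beta>). \<bar>ln \<beta>\<bar> / (J j + (if card A = u then calI I A else 0))))"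
proof -
  interpret tuned_sequential_test K M P0 P1 llr I J l u a b c d
    by unfold_locales (use assms in auto)
  show ?thesis
    using signal_asymptotics noise_asymptotics
    unfolding case_prod_unfold hat_T_def rate_signal_def rate_noise_def by blast
qed

end
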